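(* In the half-line setting, assume $r_j=0$ for all $j\ge0$ and $C_R<\infty$ (positive recurrence). Let $\pi$ be as defined below. Then for every $j\ge0$, every unit vector $\Psi_0=\sum_{k\ge0:|k-j|=1}\alpha_k\delta_{(k,j)}$ and every $i\ge0$, $$\overline{\mu}^{(\Psi_0)}_\infty(i)\ \ge\ 2\,|\langle a_j,\Psi_0\rangle|^2\,\pi(i)\,\pi(j).$$
   Context: Half-line setting: $V=\mathbb{Z}_+$, parameters $p_j,q_j,r_j\ge0$ with $p_j+q_j+r_j=1$, $q_0=0$, $p_j>0$ ($j\ge0$), $q_j>0$ ($j\ge1$); here $r_j=0$, so there are no self loops. Arcs: $|j;R\rangle=\delta_{(j+1,j)}$ ($j\ge0$), $|j;L\rangle=\delta_{(j-1,j)}$ ($j\ge1$), arc $(u,v)$ going from $v$ to $u$. Shift $S$: $|j;R\rangle\leftrightarrow|j+1;L\rangle$. $a_j=\sqrt{q_j}|j;L\rangle+\sqrt{p_j}|j;R\rangle$. $\Pi_A$ is the orthogonal projection onto the closed span of $\{a_j\}$, $C=2\Pi_A-I$, $U=SC$. $P(X_t=i)=\sum_J|\langle i;J|U^t\Psi_0\rangle|^2$ over arcs out of $i$; $\overline{\mu}^{(\Psi_0)}_\infty(i)=\lim_{T\to\infty}\frac1T\sum_{t=0}^{T-1}P(X_t=i)$. $C_R=\sum_{j\ge1}\frac{p_0\cdots p_{j-1}}{q_1\cdots q_j}$ and $\pi(j)=\frac1{1+C_R}\{\delta_0(j)+(1-\delta_0(j))\frac{p_0\cdots p_{j-1}}{q_1\cdots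 q_j}\}$. *)

theory Defs
  imports "HOL-Analysis.Analysis"
begin

text \<open>The pair (j, True) encodes |j;R> = delta_(j+1,j)
  (arc out of j towards j+1), the pair (j, False) encodes |j;L> = delta_(j-1,j)
  (arc out of j towards j-1), which exists only for j >= 1.\<close>

type_synonym arc = "nat \<times> bool"
type_synonym qstate = "arc \<Rightarrow> complex"

definition arcs :: "arc set" where
  "arcs = {(j, b). b \<or> 1 \<le> j}"

definition is_ell2 :: "qstate \<Rightarrow> bool" where
  "is_ell2 f \<longleftrightarrow> (\<forall>x. x \<notin> arcs \<longrightarrow> f x = 0) \<and> (\<lambda>x. (cmod (f x))\<^sup>2) summable_on UNIV"

definition l2inner :: "qstate \<Rightarrow> qstate \<Rightarrow> complex" where
  "l2inner f g = infsum (\<lambda>x. cnj (f x) * g x) UNIV"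

definition l2norm :: "qstate \<Rightarrow> real" where
  "l2norm f = sqrt (infsum (\<lambda>x. (cmod (f x))\<^sup>2) UNIV)"

definition avec :: "(nat \<Rightarrow> real) \<Rightarrow> (nat \<Rightarrow> real) \<Rightarrow> nat \<Rightarrow> qstate" where
  "avec p q j = (\<lambda>(k, b). if k = j \<and> (k, b) \<in> arcs
       then complex_of_real (if b then sqrt (p j) else sqrt (q j)) else 0)"

definition span_a :: "(nat \<Rightarrow> real) \<Rightarrow> (nat \<Rightarrow> real) \<Rightarrow> qstate set" where
  "span_a p q = {(\<lambda>x. \<Sum>j<N. c j * avec p q j x) | N c. True}"

definition cspan_a :: "(nat \<Rightarrow> real) \<Rightarrow> (nat \<Rightarrow> real) \<Rightarrow> qstate set" where
  "cspan_a p q = {\<phi>. is_ell2 \<phi> \<and> (\<exists>s. (\<forall>n. s n \<in> span_a p q) \<and>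
       (\<lambda>n. l2norm (\<lambda>x. s n x - \<phi> x)) \<longlonglongrightarrow> 0)}"

definition PiA :: "(nat \<Rightarrow> real) \<Rightarrow> (nat \<Rightarrow> real) \<Rightarrow> qstate \<Rightarrow> qstate" where
  "PiA p q \<psi> = (THE \<phi>. \<phi> \<in> cspan_a p q \<and>
       (\<forall>\<theta>\<in>cspan_a p q. l2inner \<theta> (\<lambda>x. \<psi> x - \<phi> x) = 0))"

definition coin :: "(nat \<Rightarrow> real) \<Rightarrow> (nat \<Rightarrow> real) \<Rightarrow> qstate \<Rightarrow> qstate" where
  "coin p q \<psi> = (\<lambda>x. 2 * PiA p q \<psi> x - \<psi> x)"

definition shift :: "qstate \<Rightarrow> qstate" where
  "shift \<psi> = (\<lambda>(k, b). if b then \<psi> (Suc k, False)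
                        else if 1 \<le> k then \<psi> (k - 1, True) else 0)"

definition evol :: "(nat \<Rightarrow> real) \<Rightarrow> (nat \<Rightarrow> real) \<Rightarrow> qstate \<Rightarrow> qstate" where
  "evol p q = shift \<circ> coin p q"

definition prob_at :: "(nat \<Rightarrow> real) \<Rightarrow> (nat \<Rightarrow> real) \<Rightarrow> qstate \<Rightarrow> nat \<Rightarrow> nat \<Rightarrow> real" where
  "prob_at p q \<Psi>0 t i =
     (let \<psi> = (evol p q ^^ t) \<Psi>0 in
       (\<Sum>x\<in>{x\<in>arcs. fst x = i}. (cmod (\<psi> x))\<^sup>2))"

definition cesaro_avg :: "(nat \<Rightarrow> real) \<Rightarrow> (nat \<Rightarrow> real) \<Rightarrow> qstate \<Rightarrow> nat \<Rightarrow> nat \<Rightarrow> real" where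
  "cesaro_avg p q \<Psi>0 i T = (1 / real T) * (\<Sum>t<T. prob_at p q \<Psi>0 t i)"

definition wgt :: "(nat \<Rightarrow> real) \<Rightarrow> (nat \<Rightarrow> real) \<Rightarrow> nat \<Rightarrow> real" where
  "wgt p q j = (\<Prod>k<j. p k) / (\<Prod>k\<in>{1..j}. q k)"

definition CR :: "(nat \<Rightarrow> real) \<Rightarrow> (nat \<Rightarrow> real) \<Rightarrow> real" where
  "CR p q = (\<Sum>j. wgt p q (Suc j))"

definition pi_stat :: "(nat \<Rightarrow> real) \<Rightarrow> (nat \<Rightarrow> real) \<Rightarrow> nat \<Rightarrow> real" where
  "pi_stat p q j = (1 / (1 + CR p q)) * (if j = 0 then 1 else wgt p q j)"

end

theory Submission
  imports Defs
begin

text \<open>The walk operator \<open>U = S (2 \<Pi>\<^sub>A - I)\<close> is an orthogonal transformation of the square-summable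
  states, viewed as a real Hilbert space. By the mean ergodic theorem the Cesaro means of \<open>(\<plusminus>U)\<^sup>t \<Psi>\<^sub>0\<close>
  converge to the projections of \<open>\<Psi>\<^sub>0\<close> onto the eigenspaces of \<open>U\<close> for \<open>\<plusminus>1\<close>. Detailed balance
  for \<open>\<pi>\<close> makes \<open>v\<^sub>\<plusminus>(k, J) = (\<plusminus>1)\<^sup>k \<surd>\<pi>(k) a\<^sub>k(J)\<close> such eigenvectors, and the eigenspaces are
  one-dimensional since an eigenvector is determined recursively by its value on \<open>|0;R\<rangle>\<close>.
  So the projections are \<open>\<langle>v\<^sub>\<plusminus>, \<Psi>\<^sub>0\<rangle> v\<^sub>\<plusminus>\<close> with \<open>|\<langle>v\<^sub>\<plusminus>, \<Psi>\<^sub>0\<rangle>|\<^sup>2 = \<pi>(j) |\<langle>a\<^sub>j, \<Psi>\<^sub>0\<rangle>|\<^sup>2\<close>.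
  At a fixed arc \<open>x\<close>, let \<open>m\<^sub>T\<close> and \<open>n\<^sub>T\<close> be the Cesaro means of \<open>u\<^sub>t = (U\<^sup>t \<Psi>\<^sub>0)(x)\<close> and of
  \<open>(-1)\<^sup>t u\<^sub>t\<close>; expanding \<open>\<Sum>t<T. |u\<^sub>t - m\<^sub>T - (-1)\<^sup>t n\<^sub>T|\<^sup>2 \<ge> 0\<close> gives
  \<open>|m\<^sub>T|\<^sup>2 + |n\<^sub>T|\<^sup>2 \<le> (1/T) \<Sum>t<T. |u\<^sub>t|\<^sup>2 + 2/T\<close>, and summing the limits over the arcs out of \<open>i\<close>
  yields \<open>2 |\<langle>a\<^sub>j, \<Psi>\<^sub>0\<rangle>|\<^sup>2 \<pi>(i) \<pi>(j)\<close>. The time-averaged probabilities converge because they are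
  diagonal entries of the Cesaro means of the isometry \<open>U \<otimes> U\<close> applied to \<open>\<Psi>\<^sub>0 \<otimes> \<Psi>\<^sub>0\<^sup>*\<close>.\<close>

section \<open>Square-summable functions\<close>

definition square_summable :: "('a \<Rightarrow> complex) \<Rightarrow> bool" where
  "square_summable f \<longleftrightarrow> (\<lambda>x. (cmod (f x))\<^sup>2) summable_on UNIV"

lemma square_summable_zero [simp]: "square_summable (\<lambda>_. 0)"
  by (simp add: square_summable_def)

lemma square_summable_add:
  assumes "square_summable f" "square_summable g"
  shows "square_summable (\<lambda>x. f x + g x)"
  unfolding square_summable_def
proof (rule summable_on_comparison_test)
  show "(\<lambda>x. 2 * (cmod (f x))\<^sup>2 + 2 * (cmod (g x))\<^sup>2) summable_on UNIV"
    using assms unfolding square_summable_def by (intro summable_on_add summable_on_cmult_right)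
  fix x
  have "(cmod (f x + g x))\<^sup>2 \<le> (cmod (f x) + cmod (g x))\<^sup>2"
    by (simp add: power_mono norm_triangle_ineq)
  also have "\<dots> \<le> 2 * (cmod (f x))\<^sup>2 + 2 * (cmod (g x))\<^sup>2"
    using zero_le_power2[of "cmod (f x) - cmod (g x)"] unfolding power2_sum power2_diff by linarith
  finally show "(cmod (f x + g x))\<^sup>2 \<le> 2 * (cmod (f x))\<^sup>2 + 2 * (cmod (g x))\<^sup>2" .
qed simp

lemma square_summable_cmult:
  assumes "square_summable f"
  shows "square_summable (\<lambda>x. c * f x)"
  using summable_on_cmult_right[OF assms[unfolded square_summable_def], of "(cmod c)\<^sup>2"]
  by (simp add: square_summable_def norm_mult power_mult_distrib)

lemma square_summable_uminus: "square_summable f \<Longrightarrow> square_summable (\<lambda>x. - f x)"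
  by (simp add: square_summable_def)

lemma square_summable_diff:
  "square_summable f \<Longrightarrow> square_summable g \<Longrightarrow> square_summable (\<lambda>x. f x - g x)"
  using square_summable_add[of f "\<lambda>x. - g x"] square_summable_uminus by auto

lemma abs_summable_cnj_mult:
  assumes "square_summable f" "square_summable g"
  shows "(\<lambda>x. norm (cnj (f x) * g x)) summable_on UNIV"
proof (rule summable_on_comparison_test)
  show "(\<lambda>x. (cmod (f x))\<^sup>2 + (cmod (g x))\<^sup>2) summable_on UNIV"
    using assms unfolding square_summable_def by (intro summable_on_add)
  fix x
  have "cmod (f x) * cmod (g x) \<le> (cmod (f x))\<^sup>2 + (cmod (g x))\<^sup>2"
    using zero_le_power2[of "cmod (f x) - cmod (g x)"] zero_le_power2[of "cmod (f x)"]
      zero_le_power2[of "cmod (g x)"] unfolding power2_diff by linarith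
  then show "norm (cnj (f x) * g x) \<le> (cmod (f x))\<^sup>2 + (cmod (g x))\<^sup>2"
    by (simp add: norm_mult)
qed simp

lemma summable_on_Re_cnj_mult:
  assumes "square_summable f" "square_summable g"
  shows "(\<lambda>x. Re (cnj (f x) * g x)) summable_on UNIV"
proof -
  have "(\<lambda>x. norm (Re (cnj (f x) * g x))) summable_on UNIV"
    by (rule summable_on_comparison_test[OF abs_summable_cnj_mult[OF assms]])
       (simp_all only: real_norm_def abs_Re_le_cmod abs_ge_zero)
  then show ?thesis by (rule abs_summable_summable)
qed

text \<open>Square-summable functions form a real inner product space with \<open>\<langle>f, g\<rangle> = Re (\<Sum>x. f\<^sup>* x g x)\<close>;
  this suffices for the mean ergodic theorem, and complex coefficients are recovered by pairing
  with \<open>f\<close> and \<open>\<i> f\<close>.\<close>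

typedef 'a l2 = "{f :: 'a \<Rightarrow> complex. square_summable f}"
  by (rule exI[of _ "\<lambda>_. 0"]) simp

setup_lifting type_definition_l2

instantiation l2 :: (type) real_inner
begin

lift_definition zero_l2 :: "'a l2" is "\<lambda>_. 0" by simp
lift_definition plus_l2 :: "'a l2 \<Rightarrow> 'a l2 \<Rightarrow> 'a l2" is "\<lambda>f g x. f x + g x"
  by (rule square_summable_add)
lift_definition uminus_l2 :: "'a l2 \<Rightarrow> 'a l2" is "\<lambda>f x. - f x"
  by (rule square_summable_uminus)
lift_definition minus_l2 :: "'a l2 \<Rightarrow> 'a l2 \<Rightarrow> 'a l2" is "\<lambda>f g x. f x - g x"
  by (rule square_summable_diff)
lift_definition scaleR_l2 :: "real \<Rightarrow> 'a l2 \<Rightarrow> 'a l2" is "\<lambda>r f x. complex_of_real r * f x"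
  by (rule square_summable_cmult)

definition "inner f g = (\<Sum>\<^sub>\<infinity>x. Re (cnj (Rep_l2 f x) * Rep_l2 g x))"
definition "norm (f :: 'a l2) = sqrt (inner f f)"
definition "sgn (f :: 'a l2) = inverse (norm f) *\<^sub>R f"
definition "dist (f :: 'a l2) g = norm (f - g)"
definition "uniformity = (INF e\<in>{0<..}. principal {(x::'a l2, y). dist x y < e})"
definition "open U = (\<forall>x\<in>U. \<forall>\<^sub>F (x', y) in uniformity. x' = (x::'a l2) \<longrightarrow> y \<in> U)"

lemma summable_on_Re_cnj_mult_Rep_l2:
  "(\<lambda>x. Re (cnj (Rep_l2 f x) * Rep_l2 g x)) summable_on UNIV"
  using Rep_l2 by (intro summable_on_Re_cnj_mult) auto

instance
proof
  fix a b c :: "'a l2" and r s :: real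
  show "a + b + c = a + (b + c)" by transfer (simp add: add.assoc)
  show "a + b = b + a" by transfer (simp add: add.commute)
  show "0 + a = a" by transfer simp
  show "- a + a = 0" by transfer simp
  show "a - b = a + - b" by transfer simp
  show "r *\<^sub>R (a + b) = r *\<^sub>R a + r *\<^sub>R b" by transfer (simp add: algebra_simps)
  show "(r + s) *\<^sub>R a = r *\<^sub>R a + s *\<^sub>R a" by transfer (simp add: algebra_simps)
  show "r *\<^sub>R s *\<^sub>R a = (r * s) *\<^sub>R a" by transfer (simp add: algebra_simps)
  show "1 *\<^sub>R a = a" by transfer simp
  show "dist a b = norm (a - b)" by (simp add: dist_l2_def)
  show "sgn a = inverse (norm a) *\<^sub>R a" by (simp add: sgn_l2_def)
  show "inner a b = inner b a"
    unfolding inner_l2_def by (rule infsum_cong) (simp add: mult.commute)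
  show "inner (a + b) c = inner a c + inner b c"
    unfolding inner_l2_def plus_l2.rep_eq
    by (subst infsum_add[OF summable_on_Re_cnj_mult_Rep_l2 summable_on_Re_cnj_mult_Rep_l2, symmetric])
       (simp add: algebra_simps)
  show "inner (r *\<^sub>R a) b = r * inner a b"
    unfolding inner_l2_def scaleR_l2.rep_eq
    by (subst infsum_cmult_right'[symmetric]) (simp add: algebra_simps)
  show "0 \<le> inner a a"
    unfolding inner_l2_def by (rule infsum_nonneg) (simp add: complex_mult_cnj)
  show "inner a a = 0 \<longleftrightarrow> a = 0"
  proof
    assume "inner a a = 0"
    then have "Re (cnj (Rep_l2 a x) * Rep_l2 a x) = 0" for x
      using nonneg_infsum_le_0D[of "\<lambda>x. Re (cnj (Rep_l2 a x) * Rep_l2 a x)" UNIV x]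
        summable_on_Re_cnj_mult_Rep_l2[of a a]
      unfolding inner_l2_def by (auto simp: complex_mult_cnj)
    then show "a = 0"
      by transfer (simp add: complex_mult_cnj complex_eq_iff fun_eq_iff)
  qed (simp add: inner_l2_def zero_l2.rep_eq)
  show "norm a = sqrt (inner a a)" by (simp add: norm_l2_def)
qed (simp only: uniformity_l2_def, simp only: open_l2_def)

end

lemma l2_eqI: "(\<And>x. Rep_l2 f x = Rep_l2 g x) \<Longrightarrow> f = g"
  by (metis Rep_l2_inject ext)

lemma square_summable_Rep_l2: "square_summable (Rep_l2 f)"
  using Rep_l2 by simp

lemma Rep_l2_sum: "Rep_l2 (\<Sum>t\<in>A. f t) x = (\<Sum>t\<in>A. Rep_l2 (f t) x)"
  by (induction A rule: infinite_finite_induct) (simp_all add: zero_l2.rep_eq plus_l2.rep_eq)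

lemma norm_l2_square: "(norm f)\<^sup>2 = (\<Sum>\<^sub>\<infinity>x. (cmod (Rep_l2 f x))\<^sup>2)"
  unfolding power2_norm_eq_inner[of f] inner_l2_def
  by (rule infsum_cong) (simp add: complex_mult_cnj cmod_power2 mult.commute)

lemma sum_square_Rep_l2_le:
  assumes "finite F"
  shows "(\<Sum>x\<in>F. (cmod (Rep_l2 f x))\<^sup>2) \<le> (norm f)\<^sup>2"
  unfolding norm_l2_square using assms square_summable_Rep_l2[of f]
  by (intro finite_sum_le_infsum) (auto simp: square_summable_def)

lemma norm_Rep_l2_le: "cmod (Rep_l2 f x) \<le> norm f"
  by (rule power2_le_imp_le) (use sum_square_Rep_l2_le[of "{x}" f] in simp_all)

lemma inner_l2_eq_Re: "v \<bullet> w = Re (\<Sum>\<^sub>\<infinity>x. cnj (Rep_l2 v x) * Rep_l2 w x)"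
  unfolding inner_l2_def
  by (rule infsum_Re, rule abs_summable_summable[OF abs_summable_cnj_mult])
    (simp_all add: square_summable_Rep_l2)

lemma bounded_linear_Rep_l2: "bounded_linear (\<lambda>f. Rep_l2 f x)"
  by (rule bounded_linear_intro[of _ 1])
     (simp_all add: plus_l2.rep_eq scaleR_l2.rep_eq scaleR_conv_of_real norm_Rep_l2_le)

lemma Cauchy_l2_tendstoI:
  assumes "Cauchy X" and pointwise: "\<And>x. (\<lambda>n. Rep_l2 (X n) x) \<longlonglongrightarrow> Rep_l2 a x"
  shows "X \<longlonglongrightarrow> a"
proof (rule LIMSEQ_I)
  fix e :: real assume "0 < e"
  then obtain M where M: "\<forall>m\<ge>M. \<forall>n\<ge>M. norm (X m - X n) < e / 2"
    using \<open>Cauchy X\<close> unfolding Cauchy_iff by (meson half_gt_zero)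
  have "(norm (X m - a))\<^sup>2 \<le> (e / 2)\<^sup>2" if m: "m \<ge> M" for m
    unfolding norm_l2_square
  proof (rule infsum_le_finite_sums)
    show "(\<lambda>x. (cmod (Rep_l2 (X m - a) x))\<^sup>2) summable_on UNIV"
      using square_summable_Rep_l2 by (simp add: square_summable_def)
    fix F :: "'a set" assume F: "finite F" "F \<subseteq> UNIV"
    have "(\<lambda>n. \<Sum>x\<in>F. (cmod (Rep_l2 (X m - X n) x))\<^sup>2) \<longlonglongrightarrow> (\<Sum>x\<in>F. (cmod (Rep_l2 (X m - a) x))\<^sup>2)"
      unfolding minus_l2.rep_eq by (intro tendsto_sum tendsto_power tendsto_norm tendsto_diff tendsto_const pointwise)
    moreover have "\<forall>n\<ge>M. (\<Sum>x\<in>F. (cmod (Rep_l2 (X m - X n) x))\<^sup>2) \<le> (e / 2)\<^sup>2"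
    proof (intro allI impI)
      fix n assume "n \<ge> M"
      then have "(norm (X m - X n))\<^sup>2 \<le> (e / 2)\<^sup>2"
        using M[rule_format, OF m] by (intro power_mono) (auto intro: less_imp_le)
      then show "(\<Sum>x\<in>F. (cmod (Rep_l2 (X m - X n) x))\<^sup>2) \<le> (e / 2)\<^sup>2"
        using sum_square_Rep_l2_le[OF F(1), of "X m - X n"] by linarith
    qed
    ultimately show "(\<Sum>x\<in>F. (cmod (Rep_l2 (X m - a) x))\<^sup>2) \<le> (e / 2)\<^sup>2"
      by (rule Lim_bounded)
  qed
  then have "norm (X m - a) \<le> e / 2" if "m \<ge> M" for m
    using that \<open>0 < e\<close> power2_le_imp_le[of "norm (X m - a)" "e / 2"] by simp
  moreover have "e / 2 < e" using \<open>0 < e\<close> by simp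
  ultimately show "\<exists>M. \<forall>m\<ge>M. norm (X m - a) < e"
    by (meson le_less_trans)
qed

instance l2 :: (type) complete_space
proof
  fix X :: "nat \<Rightarrow> 'a l2" assume "Cauchy X"
  define z where "z x = lim (\<lambda>n. Rep_l2 (X n) x)" for x
  have z: "(\<lambda>n. Rep_l2 (X n) x) \<longlonglongrightarrow> z x" for x
    unfolding z_def using bounded_linear.Cauchy[OF bounded_linear_Rep_l2 \<open>Cauchy X\<close>]
    by (simp add: Cauchy_convergent_iff convergent_LIMSEQ_iff)
  obtain K where K: "\<And>n. norm (X n) \<le> K"
    using Cauchy_Bseq[OF \<open>Cauchy X\<close>] by (auto simp: Bseq_def)
  have "(\<Sum>x\<in>F. (cmod (z x))\<^sup>2) \<le> K\<^sup>2" if F: "finite F" for F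
  proof (rule Lim_bounded)
    show "(\<lambda>n. \<Sum>x\<in>F. (cmod (Rep_l2 (X n) x))\<^sup>2) \<longlonglongrightarrow> (\<Sum>x\<in>F. (cmod (z x))\<^sup>2)"
      by (intro tendsto_intros z)
    show "\<forall>n\<ge>0. (\<Sum>x\<in>F. (cmod (Rep_l2 (X n) x))\<^sup>2) \<le> K\<^sup>2"
    proof (intro allI impI)
      fix n :: nat
      have "(norm (X n))\<^sup>2 \<le> K\<^sup>2" using K[of n] by (intro power_mono) auto
      then show "(\<Sum>x\<in>F. (cmod (Rep_l2 (X n) x))\<^sup>2) \<le> K\<^sup>2"
        using sum_square_Rep_l2_le[OF F, of "X n"] by linarith
    qed
  qed
  then have "square_summable z"
    unfolding square_summable_def by (intro nonneg_bdd_above_summable_on bdd_aboveI2) auto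
  then have "X \<longlonglongrightarrow> Abs_l2 z"
    by (intro Cauchy_l2_tendstoI[OF \<open>Cauchy X\<close>]) (simp add: Abs_l2_inverse z)
  then show "convergent X" by (auto simp: convergent_def)
qed

section \<open>Cesaro means of orthogonal transformations\<close>

definition cesaro_mean :: "('v::real_vector \<Rightarrow> 'v) \<Rightarrow> nat \<Rightarrow> 'v \<Rightarrow> 'v" where
  "cesaro_mean W T v = (1 / real T) *\<^sub>R (\<Sum>t<T. (W ^^ t) v)"

lemma orthogonal_transformation_funpow:
  fixes W :: "'a::real_inner \<Rightarrow> 'a"
  assumes "orthogonal_transformation W"
  shows "orthogonal_transformation (W ^^ t)"
proof (induction t)
  case 0
  show ?case by (simp add: id_def)
next
  case (Suc t)
  then show ?case using orthogonal_transformation_compose[OF assms Suc] by (simp add: comp_def)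
qed

lemma bounded_linear_orthogonal_transformation:
  assumes "orthogonal_transformation W"
  shows "bounded_linear W"
  using assms by (intro bounded_linear_intro[of W 1])
    (simp_all add: orthogonal_transformation linear_add linear_scale)

lemma linear_cesaro_mean:
  assumes "orthogonal_transformation W"
  shows "linear (cesaro_mean W T)"
proof (rule linearI)
  have lin: "linear (W ^^ t)" for t
    using orthogonal_transformation_funpow[OF assms] by (simp add: orthogonal_transformation)
  fix a b and r :: real
  show "cesaro_mean W T (a + b) = cesaro_mean W T a + cesaro_mean W T b"
    by (simp add: cesaro_mean_def linear_add[OF lin] sum.distrib scaleR_add_right)
  show "cesaro_mean W T (r *\<^sub>R a) = r *\<^sub>R cesaro_mean W T a"
    by (simp add: cesaro_mean_def linear_scale[OF lin] scaleR_sum_right)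
qed

lemma cesaro_mean_commute:
  assumes "linear W"
  shows "W (cesaro_mean W T v) = cesaro_mean W T (W v)"
  by (simp add: cesaro_mean_def linear_scale[OF assms] linear_sum[OF assms] funpow_swap1)

lemma norm_cesaro_mean_le:
  assumes "orthogonal_transformation W"
  shows "norm (cesaro_mean W T v) \<le> norm v"
proof (cases "T = 0")
  case False
  have "norm (\<Sum>t<T. (W ^^ t) v) \<le> (\<Sum>t<T. norm ((W ^^ t) v))" by (rule norm_sum)
  also have "\<dots> = real T * norm v"
    using orthogonal_transformation_funpow[OF assms] by (simp add: orthogonal_transformation)
  finally show ?thesis using False unfolding cesaro_mean_def by (simp add: divide_le_eq mult.commute)
qed (simp add: cesaro_mean_def)

lemma cesaro_mean_shift:
  assumes "linear W"
  shows "W (cesaro_mean W T v) - cesaro_mean W T v = (1 / real T) *\<^sub>R ((W ^^ T) v - v)"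
proof -
  have "W (cesaro_mean W T v) - cesaro_mean W T v
      = (1 / real T) *\<^sub>R (\<Sum>t<T. (W ^^ Suc t) v - (W ^^ t) v)"
    unfolding cesaro_mean_def
    by (simp add: linear_scale[OF assms] linear_sum[OF assms] sum_subtractf scaleR_diff_right)
  also have "(\<Sum>t<T. (W ^^ Suc t) v - (W ^^ t) v) = (W ^^ T) v - v"
    using sum_lessThan_telescope[of "\<lambda>t. (W ^^ t) v" T] by simp
  finally show ?thesis .
qed

lemma cesaro_mean_shift_tendsto_zero:
  assumes "orthogonal_transformation W"
  shows "(\<lambda>T. W (cesaro_mean W T v) - cesaro_mean W T v) \<longlonglongrightarrow> 0"
proof (rule Lim_null_comparison)
  have "norm ((W ^^ T) v - v) \<le> 2 * norm v" for T
    using norm_triangle_ineq4[of "(W ^^ T) v" v] orthogonal_transformation_funpow[OF assms, of T]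
    by (simp add: orthogonal_transformation)
  then show "\<forall>\<^sub>F T in sequentially. norm (W (cesaro_mean W T v) - cesaro_mean W T v) \<le> 2 * norm v / real T"
    using orthogonal_transformation_linear[OF assms]
    by (simp add: cesaro_mean_shift divide_right_mono)
  show "(\<lambda>T. 2 * norm v / real T) \<longlonglongrightarrow> 0"
    by (intro tendsto_divide_0[OF tendsto_const] filterlim_at_top_imp_at_infinity[OF filterlim_real_sequentially])
qed

lemma cesaro_mean_orbit_asymptotic:
  assumes "orthogonal_transformation W"
  shows "(\<lambda>T. cesaro_mean W T ((W ^^ k) v) - cesaro_mean W T v) \<longlonglongrightarrow> 0"
proof (induction k)
  case (Suc k)
  have "(\<lambda>T. (W (cesaro_mean W T ((W ^^ k) v)) - cesaro_mean W T ((W ^^ k) v))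
      + (cesaro_mean W T ((W ^^ k) v) - cesaro_mean W T v)) \<longlonglongrightarrow> 0 + 0"
    by (intro tendsto_add cesaro_mean_shift_tendsto_zero[OF assms] Suc)
  then show ?case
    by (simp add: cesaro_mean_commute orthogonal_transformation_linear[OF assms] funpow_swap1)
qed simp

lemma cesaro_mean_asymptotic_on_orbit_hull:
  assumes W: "orthogonal_transformation W" and y: "y \<in> convex hull range (\<lambda>k. (W ^^ k) v)"
  shows "(\<lambda>T. cesaro_mean W T y - cesaro_mean W T v) \<longlonglongrightarrow> 0"
proof -
  let ?G = "{y. (\<lambda>T. cesaro_mean W T y - cesaro_mean W T v) \<longlonglongrightarrow> 0}"
  have "convex ?G"
  proof (rule convexI)
    fix a b :: 'a and s t :: real
    assume "a \<in> ?G" "b \<in> ?G" "0 \<le> s" "0 \<le> t" "s + t = 1"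
    have "(\<lambda>T. s *\<^sub>R (cesaro_mean W T a - cesaro_mean W T v)
        + t *\<^sub>R (cesaro_mean W T b - cesaro_mean W T v)) \<longlonglongrightarrow> s *\<^sub>R 0 + t *\<^sub>R 0"
      using \<open>a \<in> ?G\<close> \<open>b \<in> ?G\<close> by (intro tendsto_add tendsto_scaleR tendsto_const) auto
    moreover have "s *\<^sub>R (cesaro_mean W T a - cesaro_mean W T v) + t *\<^sub>R (cesaro_mean W T b - cesaro_mean W T v)
        = cesaro_mean W T (s *\<^sub>R a + t *\<^sub>R b) - cesaro_mean W T v" for T
      using \<open>s + t = 1\<close> linear_cesaro_mean[OF W, of T]
      by (simp add: linear_add linear_scale algebra_simps flip: scaleR_add_left)
    ultimately show "s *\<^sub>R a + t *\<^sub>R b \<in> ?G" by simp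
  qed
  moreover have "range (\<lambda>k. (W ^^ k) v) \<subseteq> ?G"
    using cesaro_mean_orbit_asymptotic[OF W] by auto
  ultimately show ?thesis using y hull_minimal[of _ ?G convex] by blast
qed

lemma cesaro_mean_in_orbit_hull:
  assumes W: "orthogonal_transformation W" and y: "y \<in> convex hull range (\<lambda>k. (W ^^ k) v)"
    and "T \<ge> 1"
  shows "cesaro_mean W T y \<in> convex hull range (\<lambda>k. (W ^^ k) v)"
proof -
  let ?H = "convex hull range (\<lambda>k. (W ^^ k) v)"
  have invariant: "W z \<in> ?H" if "z \<in> ?H" for z
  proof -
    have "W z \<in> convex hull (W ` range (\<lambda>k. (W ^^ k) v))"
      using that convex_hull_linear_image[OF orthogonal_transformation_linear[OF W]] by blast
    also have "\<dots> \<subseteq> ?H"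
      by (rule hull_mono) (auto simp flip: funpow.simps(2) o_apply[of W])
    finally show ?thesis .
  qed
  have "(W ^^ t) y \<in> ?H" for t
    using y by (induction t) (simp_all add: invariant)
  then have "(\<Sum>t<T. (1 / real T) *\<^sub>R (W ^^ t) y) \<in> ?H"
    using \<open>T \<ge> 1\<close> by (intro convex_sum) auto
  then show ?thesis by (simp add: cesaro_mean_def scaleR_sum_right)
qed

lemma convex_near_minimal_norm:
  fixes u v :: "'a::real_inner"
  assumes "convex H" "u \<in> H" "v \<in> H" and minimal: "\<And>w. w \<in> H \<Longrightarrow> d \<le> norm w" and "0 \<le> d"
    and "norm u \<le> d + \<delta>" "norm v \<le> d + \<delta>"
  shows "(norm (u - v))\<^sup>2 \<le> 4 * \<delta> * (2 * d + \<delta>)"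
proof -
  have "(1/2) *\<^sub>R u + (1/2) *\<^sub>R v \<in> H"
    using assms(1-3) by (intro convexD) auto
  then have "2 * d \<le> norm (u + v)"
    using minimal by (fastforce simp flip: scaleR_add_right)
  then have "4 * d\<^sup>2 \<le> (norm (u + v))\<^sup>2"
    using \<open>0 \<le> d\<close> power_mono[of "2 * d" "norm (u + v)" 2] by (simp add: power_mult_distrib)
  moreover have "(norm u)\<^sup>2 \<le> (d + \<delta>)\<^sup>2" "(norm v)\<^sup>2 \<le> (d + \<delta>)\<^sup>2"
    using assms(6,7) by (auto intro!: power_mono)
  moreover have "(norm (u - v))\<^sup>2 + (norm (u + v))\<^sup>2 = 2 * (norm u)\<^sup>2 + 2 * (norm v)\<^sup>2"
    by (simp add: power2_norm_eq_inner inner_diff_left inner_diff_right inner_add_left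
        inner_add_right inner_commute)
  ultimately show ?thesis by (simp add: power2_eq_square algebra_simps)
qed

text \<open>An element of nearly minimal norm in the convex hull of an orbit is almost fixed by all
  Cesaro means, since these map the hull into itself without increasing norms.\<close>

lemma orbit_hull_almost_fixed:
  fixes W :: "'a::real_inner \<Rightarrow> 'a"
  assumes W: "orthogonal_transformation W" and "0 < e"
  obtains y where "y \<in> convex hull range (\<lambda>k. (W ^^ k) v)"
    and "\<And>T. T \<ge> 1 \<Longrightarrow> norm (cesaro_mean W T y - y) \<le> e"
proof -
  define H where "H = convex hull range (\<lambda>k. (W ^^ k) v)"
  define d where "d = Inf (norm ` H)"
  have "v \<in> H" unfolding H_def by (rule hull_inc) (metis funpow_0 rangeI)
  have d_le: "d \<le> norm w" if "w \<in> H" for w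
    unfolding d_def using that by (intro cInf_lower bdd_belowI[of _ 0]) auto
  have "0 \<le> d" unfolding d_def using \<open>v \<in> H\<close> by (intro cInf_greatest) auto
  define \<delta> where "\<delta> = min 1 (e\<^sup>2 / (4 * (2 * d + 1)))"
  have "0 < \<delta>" using \<open>0 < e\<close> \<open>0 \<le> d\<close> by (simp add: \<delta>_def)
  then obtain y where "y \<in> H" and y: "norm y < d + \<delta>"
    using cInf_lessD[of "norm ` H" "d + \<delta>"] \<open>v \<in> H\<close> unfolding d_def by force
  have "\<delta> \<le> 1" "\<delta> \<le> e\<^sup>2 / (4 * (2 * d + 1))" by (simp_all add: \<delta>_def)
  have "4 * \<delta> * (2 * d + \<delta>) \<le> \<delta> * (4 * (2 * d + 1))"
    using mult_left_mono[OF \<open>\<delta> \<le> 1\<close>, of "4 * \<delta>"] \<open>0 < \<delta>\<close> by (simp add: algebra_simps)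
  also have "\<dots> \<le> e\<^sup>2"
    using \<open>\<delta> \<le> e\<^sup>2 / (4 * (2 * d + 1))\<close> \<open>0 \<le> d\<close> by (simp add: pos_le_divide_eq)
  finally have small: "4 * \<delta> * (2 * d + \<delta>) \<le> e\<^sup>2" .
  have "norm (cesaro_mean W T y - y) \<le> e" if "T \<ge> 1" for T
  proof -
    have "cesaro_mean W T y \<in> H"
      using cesaro_mean_in_orbit_hull[OF W _ that] \<open>y \<in> H\<close> unfolding H_def by blast
    moreover have "norm (cesaro_mean W T y) \<le> d + \<delta>"
      using norm_cesaro_mean_le[OF W, of T y] y by linarith
    ultimately have "(norm (cesaro_mean W T y - y))\<^sup>2 \<le> e\<^sup>2"
      using convex_near_minimal_norm[of H, OF _ _ \<open>y \<in> H\<close> d_le \<open>0 \<le> d\<close>] y small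
      unfolding H_def by fastforce
    then show ?thesis by (rule power2_le_imp_le) (use \<open>0 < e\<close> in simp)
  qed
  with \<open>y \<in> H\<close>[unfolded H_def] show ?thesis by (rule that)
qed

theorem Cauchy_cesaro_mean:
  fixes W :: "'a::real_inner \<Rightarrow> 'a"
  assumes W: "orthogonal_transformation W"
  shows "Cauchy (\<lambda>T. cesaro_mean W T v)"
proof (rule CauchyI)
  fix e :: real assume "0 < e"
  then obtain y where "y \<in> convex hull range (\<lambda>k. (W ^^ k) v)"
    and close: "\<And>T. T \<ge> 1 \<Longrightarrow> norm (cesaro_mean W T y - y) \<le> e / 4"
    using orbit_hull_almost_fixed[OF W, of "e / 4"] by auto
  then have "(\<lambda>T. cesaro_mean W T y - cesaro_mean W T v) \<longlonglongrightarrow> 0"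
    using cesaro_mean_asymptotic_on_orbit_hull[OF W] by blast
  then obtain M where M: "\<And>T. T \<ge> M \<Longrightarrow> norm (cesaro_mean W T y - cesaro_mean W T v) < e / 4"
    using \<open>0 < e\<close> unfolding LIMSEQ_iff by (metis diff_zero zero_less_divide_iff zero_less_numeral)
  show "\<exists>M. \<forall>m\<ge>M. \<forall>n\<ge>M. norm (cesaro_mean W m v - cesaro_mean W n v) < e"
  proof (intro exI allI impI)
    fix m n assume "max 1 M \<le> m" "max 1 M \<le> n"
    have triangle: "norm (- a + b + - c + d) \<le> norm a + norm b + norm c + norm d" for a b c d :: 'a
      using norm_triangle_ineq[of "- a + b + - c" d] norm_triangle_ineq[of "- a + b" "- c"]
        norm_triangle_ineq[of "- a" b] by simp
    have "norm (cesaro_mean W m v - cesaro_mean W n v)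
        \<le> norm (cesaro_mean W m y - cesaro_mean W m v) + norm (cesaro_mean W m y - y)
          + norm (cesaro_mean W n y - y) + norm (cesaro_mean W n y - cesaro_mean W n v)"
      using triangle[of "cesaro_mean W m y - cesaro_mean W m v" "cesaro_mean W m y - y"
          "cesaro_mean W n y - y" "cesaro_mean W n y - cesaro_mean W n v"] by simp
    also have "\<dots> < e"
      using M[of m] M[of n] close[of m] close[of n] \<open>max 1 M \<le> m\<close> \<open>max 1 M \<le> n\<close> by simp
    finally show "norm (cesaro_mean W m v - cesaro_mean W n v) < e" .
  qed
qed

lemma cesaro_mean_limit_fixed:
  assumes W: "orthogonal_transformation W" and lim: "(\<lambda>T. cesaro_mean W T v) \<longlonglongrightarrow> V"
  shows "W V = V"
proof -
  have "(\<lambda>T. W (cesaro_mean W T v) - cesaro_mean W T v) \<longlonglongrightarrow> W V - V"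
    by (intro tendsto_diff lim bounded_linear.tendsto[OF bounded_linear_orthogonal_transformation[OF W]])
  then have "W V - V = 0"
    using cesaro_mean_shift_tendsto_zero[OF W] by (rule LIMSEQ_unique)
  then show ?thesis by simp
qed

lemma inner_cesaro_mean_fixed:
  fixes W :: "'a::real_inner \<Rightarrow> 'a"
  assumes W: "orthogonal_transformation W" and "W a = a" and "T \<ge> 1"
  shows "a \<bullet> cesaro_mean W T v = a \<bullet> v"
proof -
  have "(W ^^ t) a = a" for t
    using \<open>W a = a\<close> by (induction t) auto
  then have "a \<bullet> (W ^^ t) v = a \<bullet> v" for t
    using orthogonal_transformation_funpow[OF W, of t] unfolding orthogonal_transformation_def by metis
  then show ?thesis
    using \<open>T \<ge> 1\<close> by (simp add: cesaro_mean_def inner_sum_right)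
qed

lemma inner_cesaro_limit_fixed:
  fixes W :: "'a::real_inner \<Rightarrow> 'a"
  assumes W: "orthogonal_transformation W" and "W a = a"
    and lim: "(\<lambda>T. cesaro_mean W T v) \<longlonglongrightarrow> V"
  shows "a \<bullet> V = a \<bullet> v"
proof -
  have "(\<lambda>T. a \<bullet> cesaro_mean W (Suc T) v) \<longlonglongrightarrow> a \<bullet> V"
    using lim by (intro tendsto_inner tendsto_const LIMSEQ_Suc)
  then show ?thesis
    using inner_cesaro_mean_fixed[OF W \<open>W a = a\<close>] by (simp add: LIMSEQ_const_iff)
qed

lemma sum_alternating_sign: "(\<Sum>t<T. (-1::real) ^ t) = (if even T then 0 else 1)"
  by (induction T) auto

lemma cesaro_alternating_norm_bound:
  fixes u :: "nat \<Rightarrow> 'a::real_inner"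
  assumes "T > 0"
  defines "m \<equiv> (1 / real T) *\<^sub>R (\<Sum>t<T. u t)"
  defines "n \<equiv> (1 / real T) *\<^sub>R (\<Sum>t<T. (-1) ^ t *\<^sub>R u t)"
  shows "(norm m)\<^sup>2 + (norm n)\<^sup>2 \<le> (1 / real T) * (\<Sum>t<T. (norm (u t))\<^sup>2) + 2 * \<bar>m \<bullet> n\<bar> / real T"
proof -
  define \<sigma> where "\<sigma> = (\<Sum>t<T. (-1::real) ^ t)"
  have sign_square: "(-1::real) ^ t * (-1) ^ t = 1" for t
    by (simp flip: power_mult_distrib)
  have expand: "(norm (u t - m - (-1) ^ t *\<^sub>R n))\<^sup>2 = (norm (u t))\<^sup>2 - 2 * (u t \<bullet> m)
      - 2 * ((-1) ^ t * (u t \<bullet> n)) + (norm m)\<^sup>2 + 2 * ((-1) ^ t * (m \<bullet> n)) + (norm n)\<^sup>2" for t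
    using sign_square[of t]
    by (simp add: power2_norm_eq_inner inner_diff_left inner_diff_right inner_commute algebra_simps)
  have "(\<Sum>t<T. u t) = real T *\<^sub>R m" "(\<Sum>t<T. (-1) ^ t *\<^sub>R u t) = real T *\<^sub>R n"
    using \<open>T > 0\<close> by (simp_all add: m_def n_def)
  moreover have "(\<Sum>t<T. (-1) ^ t * (u t \<bullet> n)) = (\<Sum>t<T. (-1) ^ t *\<^sub>R u t) \<bullet> n"
    by (simp add: inner_sum_left)
  ultimately have sum_m: "(\<Sum>t<T. u t \<bullet> m) = real T * (norm m)\<^sup>2"
    and sum_n: "(\<Sum>t<T. (-1) ^ t * (u t \<bullet> n)) = real T * (norm n)\<^sup>2"
    by (simp_all add: power2_norm_eq_inner flip: inner_sum_left)
  have "0 \<le> (\<Sum>t<T. (norm (u t - m - (-1) ^ t *\<^sub>R n))\<^sup>2)"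
    by (rule sum_nonneg) simp
  also have "\<dots> = (\<Sum>t<T. (norm (u t))\<^sup>2) - 2 * (\<Sum>t<T. u t \<bullet> m)
      - 2 * (\<Sum>t<T. (-1) ^ t * (u t \<bullet> n)) + real T * (norm m)\<^sup>2
      + 2 * (\<Sum>t<T. (-1) ^ t * (m \<bullet> n)) + real T * (norm n)\<^sup>2"
    unfolding expand by (simp add: sum.distrib sum_subtractf sum_distrib_left)
  also have "\<dots> = (\<Sum>t<T. (norm (u t))\<^sup>2) - real T * (norm m)\<^sup>2 - real T * (norm n)\<^sup>2
      + 2 * \<sigma> * (m \<bullet> n)"
    by (simp add: sum_m sum_n \<sigma>_def sum_distrib_right)
  finally have "real T * ((norm m)\<^sup>2 + (norm n)\<^sup>2) \<le> (\<Sum>t<T. (norm (u t))\<^sup>2) + 2 * \<sigma> * (m \<bullet> n)"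
    by (simp add: algebra_simps)
  moreover have "\<sigma> * (m \<bullet> n) \<le> \<bar>m \<bullet> n\<bar>"
    unfolding \<sigma>_def sum_alternating_sign by auto
  ultimately show ?thesis
    using \<open>T > 0\<close> by (simp add: field_simps)
qed

section \<open>Tensor squares of real isometries\<close>

lemma nonneg_summable_on_Sigma_iff:
  fixes f :: "'a \<times> 'b \<Rightarrow> real"
  assumes "\<And>z. f z \<ge> 0"
  shows "f summable_on UNIV \<longleftrightarrow>
    (\<forall>x. (\<lambda>y. f (x, y)) summable_on UNIV) \<and> (\<lambda>x. \<Sum>\<^sub>\<infinity>y. f (x, y)) summable_on UNIV"
proof -
  have norm_f: "norm (f z) = f z" for z using assms[of z] by simp
  have "f summable_on UNIV \<longleftrightarrow> (\<lambda>z. norm (f z)) summable_on Sigma UNIV (\<lambda>_. UNIV)"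
    by (simp only: norm_f UNIV_Times_UNIV)
  also have "\<dots> \<longleftrightarrow> (\<forall>x\<in>UNIV. (\<lambda>y. norm (f (x, y))) summable_on UNIV) \<and>
      (\<lambda>x. norm (\<Sum>\<^sub>\<infinity>y. norm (f (x, y)))) summable_on UNIV"
    by (rule Infinite_Sum.abs_summable_on_Sigma_iff)
  finally show ?thesis by (simp add: norm_f infsum_nonneg assms)
qed

lemma nonneg_infsum_sections_eq:
  fixes f g :: "'a \<times> 'b \<Rightarrow> real"
  assumes "\<And>z. f z \<ge> 0" "\<And>z. g z \<ge> 0" "f summable_on UNIV"
    and sections: "\<And>x. (\<lambda>y. f (x, y)) summable_on UNIV \<Longrightarrow>
      (\<lambda>y. g (x, y)) summable_on UNIV \<and> (\<Sum>\<^sub>\<infinity>y. g (x, y)) = (\<Sum>\<^sub>\<infinity>y. f (x, y))"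
  shows "g summable_on UNIV" and "(\<Sum>\<^sub>\<infinity>z. g z) = (\<Sum>\<^sub>\<infinity>z. f z)"
proof -
  have f_sections: "\<forall>x. (\<lambda>y. f (x, y)) summable_on UNIV" "(\<lambda>x. \<Sum>\<^sub>\<infinity>y. f (x, y)) summable_on UNIV"
    using nonneg_summable_on_Sigma_iff[of f] assms(1,3) by auto
  show g: "g summable_on UNIV"
    using nonneg_summable_on_Sigma_iff[of g] assms(2) f_sections sections by auto
  show "(\<Sum>\<^sub>\<infinity>z. g z) = (\<Sum>\<^sub>\<infinity>z. f z)"
    using infsum_Sigma_banach[of g UNIV "\<lambda>_. UNIV"] infsum_Sigma_banach[of f UNIV "\<lambda>_. UNIV"]
      g \<open>f summable_on UNIV\<close> f_sections sections by simp
qed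

definition apply_snd :: "(('b \<Rightarrow> complex) \<Rightarrow> 'b \<Rightarrow> complex) \<Rightarrow> ('a \<times> 'b \<Rightarrow> complex) \<Rightarrow> 'a \<times> 'b \<Rightarrow> complex"
  where "apply_snd F X z = F (\<lambda>y. X (fst z, y)) (snd z)"

definition apply_fst :: "(('a \<Rightarrow> complex) \<Rightarrow> 'a \<Rightarrow> complex) \<Rightarrow> ('a \<times> 'b \<Rightarrow> complex) \<Rightarrow> 'a \<times> 'b \<Rightarrow> complex"
  where "apply_fst F X z = F (\<lambda>x. X (x, snd z)) (fst z)"

definition outer :: "('a \<Rightarrow> complex) \<Rightarrow> 'a \<times> 'a \<Rightarrow> complex" where
  "outer f z = f (fst z) * cnj (f (snd z))"

lemma square_summable_outer:
  assumes "square_summable f"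
  shows "square_summable (outer f)"
proof -
  let ?f = "\<lambda>x. (cmod (f x))\<^sup>2"
  have f: "?f summable_on UNIV" using assms by (simp add: square_summable_def)
  have "(\<lambda>z. ?f (fst z) * ?f (snd z)) summable_on UNIV"
    unfolding nonneg_summable_on_Sigma_iff[of "\<lambda>z. ?f (fst z) * ?f (snd z)", OF mult_nonneg_nonneg[OF zero_le_power2 zero_le_power2]]
    using summable_on_cmult_right[OF f] summable_on_cmult_left[OF f] by (simp add: infsum_cmult_right')
  then show ?thesis
    by (simp add: square_summable_def outer_def norm_mult power_mult_distrib)
qed

text \<open>Commuting with conjugation (a real matrix) is needed only for the tensor square, which then
  maps \<open>outer f\<close> to \<open>outer (F f)\<close>.\<close>

locale real_l2_isometry =
  fixes F :: "('a \<Rightarrow> complex) \<Rightarrow> 'a \<Rightarrow> complex"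
  assumes add: "F (\<lambda>x. f x + g x) = (\<lambda>x. F f x + F g x)"
    and cmult: "F (\<lambda>x. c * f x) = (\<lambda>x. c * F f x)"
    and cnj: "F (\<lambda>x. cnj (f x)) = (\<lambda>x. cnj (F f x))"
    and square_summable: "square_summable f \<Longrightarrow> square_summable (F f)"
    and square_sum: "square_summable f \<Longrightarrow> (\<Sum>\<^sub>\<infinity>x. (cmod (F f x))\<^sup>2) = (\<Sum>\<^sub>\<infinity>x. (cmod (f x))\<^sup>2)"
begin

definition l2_map :: "'a l2 \<Rightarrow> 'a l2" where
  "l2_map v = Abs_l2 (F (Rep_l2 v))"

lemma Rep_l2_map: "Rep_l2 (l2_map v) = F (Rep_l2 v)"
  unfolding l2_map_def by (simp add: Abs_l2_inverse square_summable square_summable_Rep_l2)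

lemma orthogonal_transformation_l2_map: "orthogonal_transformation l2_map"
  unfolding orthogonal_transformation
proof (intro conjI allI linearI)
  fix a b :: "'a l2" and r :: real
  show "l2_map (a + b) = l2_map a + l2_map b"
    by (rule l2_eqI) (simp add: Rep_l2_map plus_l2.rep_eq add)
  show "l2_map (r *\<^sub>R a) = r *\<^sub>R l2_map a"
    by (rule l2_eqI) (simp add: Rep_l2_map scaleR_l2.rep_eq cmult)
  have "(norm (l2_map a))\<^sup>2 = (norm a)\<^sup>2"
    by (simp add: norm_l2_square Rep_l2_map square_sum square_summable_Rep_l2)
  then show "norm (l2_map a) = norm a" by simp
qed

lemma apply_snd_square_sum:
  assumes "square_summable X"
  shows "square_summable (apply_snd F X)"
    and "(\<Sum>\<^sub>\<infinity>z. (cmod (apply_snd F X z))\<^sup>2) = (\<Sum>\<^sub>\<infinity>z. (cmod (X z))\<^sup>2)"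
  using nonneg_infsum_sections_eq[of "\<lambda>z. (cmod (X z))\<^sup>2" "\<lambda>z. (cmod (apply_snd F X z))\<^sup>2"] assms
    square_summable[of "\<lambda>y. X (_, y)"] square_sum[of "\<lambda>y. X (_, y)"]
  by (auto simp: square_summable_def apply_snd_def)

lemma apply_fst_square_sum:
  assumes "square_summable X"
  shows "square_summable (apply_fst F X)"
    and "(\<Sum>\<^sub>\<infinity>z. (cmod (apply_fst F X z))\<^sup>2) = (\<Sum>\<^sub>\<infinity>z. (cmod (X z))\<^sup>2)"
proof -
  have swap: "bij_betw prod.swap UNIV UNIV" by (auto intro: bij_betwI[of _ _ _ prod.swap])
  define Y where "Y z = X (prod.swap z)" for z
  have apply_fst_swap: "apply_fst F X z = apply_snd F Y (prod.swap z)" for z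
    by (simp add: apply_fst_def apply_snd_def Y_def)
  have Y: "square_summable Y"
    using assms summable_on_reindex_bij_betw[OF swap, of "\<lambda>z. (cmod (X z))\<^sup>2"]
    by (simp add: square_summable_def Y_def)
  show "square_summable (apply_fst F X)"
    using apply_snd_square_sum(1)[OF Y]
      summable_on_reindex_bij_betw[OF swap, of "\<lambda>z. (cmod (apply_snd F Y z))\<^sup>2"]
    by (simp add: square_summable_def apply_fst_swap)
  show "(\<Sum>\<^sub>\<infinity>z. (cmod (apply_fst F X z))\<^sup>2) = (\<Sum>\<^sub>\<infinity>z. (cmod (X z))\<^sup>2)"
    using apply_snd_square_sum(2)[OF Y]
      infsum_reindex_bij_betw[OF swap, of "\<lambda>z. (cmod (apply_snd F Y z))\<^sup>2"]
      infsum_reindex_bij_betw[OF swap, of "\<lambda>z. (cmod (X z))\<^sup>2"]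
    by (simp add: apply_fst_swap Y_def)
qed

lemma apply_snd_add: "apply_snd F (\<lambda>z. X z + Y z) = (\<lambda>z. apply_snd F X z + apply_snd F Y z)"
  and apply_fst_add: "apply_fst F (\<lambda>z. X z + Y z) = (\<lambda>z. apply_fst F X z + apply_fst F Y z)"
  and apply_snd_cmult: "apply_snd F (\<lambda>z. c * X z) = (\<lambda>z. c * apply_snd F X z)"
  and apply_fst_cmult: "apply_fst F (\<lambda>z. c * X z) = (\<lambda>z. c * apply_fst F X z)"
  by (simp_all add: fun_eq_iff apply_snd_def apply_fst_def add cmult)

lemma apply_fst_apply_snd_outer: "apply_fst F (apply_snd F (outer f)) = outer (F f)"
proof -
  have "apply_snd F (outer f) = (\<lambda>z. f (fst z) * cnj (F f (snd z)))"
    using cmult[of "f _" "\<lambda>y. cnj (f y)"] by (simp add: fun_eq_iff apply_snd_def outer_def cnj)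
  then show ?thesis
    using cmult[of "cnj (F f _)" f] by (simp add: fun_eq_iff apply_fst_def outer_def mult.commute)
qed

definition tensor_map :: "('a \<times> 'a) l2 \<Rightarrow> ('a \<times> 'a) l2" where
  "tensor_map X = Abs_l2 (apply_fst F (apply_snd F (Rep_l2 X)))"

lemma Rep_tensor_map: "Rep_l2 (tensor_map X) = apply_fst F (apply_snd F (Rep_l2 X))"
  unfolding tensor_map_def
  by (simp add: Abs_l2_inverse apply_fst_square_sum apply_snd_square_sum square_summable_Rep_l2)

lemma orthogonal_transformation_tensor_map: "orthogonal_transformation tensor_map"
  unfolding orthogonal_transformation
proof (intro conjI allI linearI)
  fix a b :: "('a \<times> 'a) l2" and r :: real
  show "tensor_map (a + b) = tensor_map a + tensor_map b"
    by (rule l2_eqI) (simp add: Rep_tensor_map plus_l2.rep_eq apply_snd_add apply_fst_add)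
  show "tensor_map (r *\<^sub>R a) = r *\<^sub>R tensor_map a"
    by (rule l2_eqI) (simp add: Rep_tensor_map scaleR_l2.rep_eq apply_snd_cmult apply_fst_cmult)
  have "(norm (tensor_map a))\<^sup>2 = (norm a)\<^sup>2"
    by (simp add: norm_l2_square Rep_tensor_map apply_fst_square_sum apply_snd_square_sum
        square_summable_Rep_l2)
  then show "norm (tensor_map a) = norm a" by simp
qed

lemma Rep_tensor_map_funpow_outer:
  assumes "square_summable f"
  shows "Rep_l2 ((tensor_map ^^ t) (Abs_l2 (outer f))) = outer ((F ^^ t) f)"
proof (induction t)
  case 0
  show ?case using assms by (simp add: Abs_l2_inverse square_summable_outer)
next
  case (Suc t)
  then show ?case by (simp add: Rep_tensor_map apply_fst_apply_snd_outer)
qed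

theorem convergent_cesaro_square:
  assumes "square_summable f"
  shows "convergent (\<lambda>T. (1 / real T) * (\<Sum>t<T. (cmod ((F ^^ t) f x))\<^sup>2))"
proof -
  let ?M = "\<lambda>T. cesaro_mean tensor_map T (Abs_l2 (outer f))"
  have "convergent ?M"
    using Cauchy_cesaro_mean[OF orthogonal_transformation_tensor_map] by (rule Cauchy_convergent)
  then obtain L where "?M \<longlonglongrightarrow> L" by (auto simp: convergent_def)
  then have "(\<lambda>T. Re (Rep_l2 (?M T) (x, x))) \<longlonglongrightarrow> Re (Rep_l2 L (x, x))"
    by (intro tendsto_Re bounded_linear.tendsto[OF bounded_linear_Rep_l2])
  moreover have "Re (Rep_l2 (?M T) (x, x)) = (1 / real T) * (\<Sum>t<T. (cmod ((F ^^ t) f x))\<^sup>2)" for T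
    by (simp add: cesaro_mean_def scaleR_l2.rep_eq Rep_l2_sum Rep_tensor_map_funpow_outer[OF assms]
        outer_def Re_sum flip: complex_norm_square)
  ultimately show ?thesis by (auto simp: convergent_def)
qed

end

section \<open>The walk on the half-line\<close>

lemma infsum_tail_tendsto_zero:
  fixes B :: "nat \<Rightarrow> real"
  assumes "B summable_on UNIV"
  shows "(\<lambda>n. \<Sum>\<^sub>\<infinity>j. if n \<le> j then B j else 0) \<longlonglongrightarrow> 0"
proof -
  have tail: "(\<Sum>\<^sub>\<infinity>j. if n \<le> j then B j else 0) = (\<Sum>\<^sub>\<infinity>j. B j) - (\<Sum>j<n. B j)" for n
  proof -
    have "B summable_on {n..}" using assms by (rule summable_on_subset_banach) auto
    have "(\<Sum>\<^sub>\<infinity>j. B j) = infsum B ({..<n} \<union> {n..})"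
      by (rule arg_cong[where f = "infsum B"]) auto
    also have "\<dots> = (\<Sum>j<n. B j) + infsum B {n..}"
      using \<open>B summable_on {n..}\<close> by (subst infsum_Un_disjoint) auto
    finally have "(\<Sum>\<^sub>\<infinity>j. B j) = (\<Sum>j<n. B j) + infsum B {n..}" .
    moreover have "(\<Sum>\<^sub>\<infinity>j. if n \<le> j then B j else 0) = infsum B {n..}"
      by (rule infsum_cong_neutral) auto
    ultimately show ?thesis by simp
  qed
  have "(\<lambda>n. \<Sum>j<n. B j) \<longlonglongrightarrow> (\<Sum>\<^sub>\<infinity>j. B j)"
    using has_sum_imp_sums[OF has_sum_infsum[OF assms]] by (simp add: sums_def)
  then have "(\<lambda>n. (\<Sum>\<^sub>\<infinity>j. B j) - (\<Sum>j<n. B j)) \<longlonglongrightarrow> (\<Sum>\<^sub>\<infinity>j. B j) - (\<Sum>\<^sub>\<infinity>j. B j)"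
    by (intro tendsto_diff tendsto_const)
  then show ?thesis unfolding tail by simp
qed

lemma infsum_nat_bool:
  fixes f :: "nat \<times> bool \<Rightarrow> 'b::banach"
  assumes "f summable_on UNIV"
  shows "(\<lambda>j. f (j, True) + f (j, False)) summable_on UNIV"
    and "(\<Sum>\<^sub>\<infinity>x. f x) = (\<Sum>\<^sub>\<infinity>j. f (j, True) + f (j, False))"
proof -
  have blocks: "(\<Sum>\<^sub>\<infinity>b. f (j, b)) = f (j, True) + f (j, False)" for j
    by (simp add: UNIV_bool add.commute)
  have sigma: "f summable_on Sigma UNIV (\<lambda>_. UNIV)" using assms by (simp add: UNIV_Times_UNIV)
  show "(\<lambda>j. f (j, True) + f (j, False)) summable_on UNIV"
    using summable_on_SigmaD[OF sigma] by (simp add: blocks)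
  show "(\<Sum>\<^sub>\<infinity>x. f x) = (\<Sum>\<^sub>\<infinity>j. f (j, True) + f (j, False))"
    using infsum_Sigma_banach[OF sigma] by (simp add: blocks UNIV_Times_UNIV)
qed

lemma nonneg_summable_on_nat_bool:
  fixes f :: "nat \<times> bool \<Rightarrow> real"
  assumes "\<And>x. f x \<ge> 0" and "(\<lambda>j. f (j, True) + f (j, False)) summable_on UNIV"
  shows "f summable_on UNIV"
proof -
  have "((\<lambda>b. f (j, b)) has_sum (f (j, True) + f (j, False))) UNIV" for j
    using has_sum_finite[of UNIV "\<lambda>b. f (j, b)"] by (simp add: UNIV_bool add.commute)
  then have "f summable_on Sigma UNIV (\<lambda>_. UNIV)"
    using assms by (intro summable_on_SigmaI) auto
  then show ?thesis by (simp add: UNIV_Times_UNIV)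
qed

lemma square_summable_nat_bool_blocks:
  fixes f g :: "nat \<times> bool \<Rightarrow> complex"
  assumes "square_summable f"
    and blocks: "\<And>j. (cmod (g (j, True)))\<^sup>2 + (cmod (g (j, False)))\<^sup>2 \<le> (cmod (f (j, True)))\<^sup>2 + (cmod (f (j, False)))\<^sup>2"
  shows "square_summable g"
  unfolding square_summable_def
proof (rule nonneg_summable_on_nat_bool)
  have "(\<lambda>j. (cmod (f (j, True)))\<^sup>2 + (cmod (f (j, False)))\<^sup>2) summable_on UNIV"
    using infsum_nat_bool(1)[of "\<lambda>x. (cmod (f x))\<^sup>2"] assms(1) by (simp add: square_summable_def)
  then show "(\<lambda>j. (cmod (g (j, True)))\<^sup>2 + (cmod (g (j, False)))\<^sup>2) summable_on UNIV"
    by (rule summable_on_comparison_test) (use blocks in auto)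
qed simp

lemma square_sum_nat_bool_blocks_eq:
  fixes f g :: "nat \<times> bool \<Rightarrow> complex"
  assumes "square_summable f"
    and blocks: "\<And>j. (cmod (g (j, True)))\<^sup>2 + (cmod (g (j, False)))\<^sup>2 = (cmod (f (j, True)))\<^sup>2 + (cmod (f (j, False)))\<^sup>2"
  shows "square_summable g" and "(\<Sum>\<^sub>\<infinity>x. (cmod (g x))\<^sup>2) = (\<Sum>\<^sub>\<infinity>x. (cmod (f x))\<^sup>2)"
proof -
  show g: "square_summable g"
    using square_summable_nat_bool_blocks[OF assms(1)] blocks by simp
  show "(\<Sum>\<^sub>\<infinity>x. (cmod (g x))\<^sup>2) = (\<Sum>\<^sub>\<infinity>x. (cmod (f x))\<^sup>2)"
    using infsum_nat_bool(2)[of "\<lambda>x. (cmod (g x))\<^sup>2"] infsum_nat_bool(2)[of "\<lambda>x. (cmod (f x))\<^sup>2"]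
      g assms(1) by (simp add: square_summable_def blocks)
qed

text \<open>The coin \<open>2 |a\<rangle>\<langle>a| - I\<close> at one vertex, for the real unit vector \<open>a = (b, a)\<close>.\<close>

lemma reflection_norm:
  fixes a b :: real and x y :: complex
  assumes "a\<^sup>2 + b\<^sup>2 = 1"
  shows "(cmod (2 * (of_real a * y + of_real b * x) * of_real b - x))\<^sup>2
       + (cmod (2 * (of_real a * y + of_real b * x) * of_real a - y))\<^sup>2 = (cmod x)\<^sup>2 + (cmod y)\<^sup>2"
proof -
  have "(Re x)\<^sup>2 + (Im x)\<^sup>2 + (Re y)\<^sup>2 + (Im y)\<^sup>2 =
        (2 * (a * Re y + b * Re x) * b - Re x)\<^sup>2 + (2 * (a * Im y + b * Im x) * b - Im x)\<^sup>2
      + (2 * (a * Re y + b * Re x) * a - Re y)\<^sup>2 + (2 * (a * Im y + b * Im x) * a - Im y)\<^sup>2"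
    using assms by algebra
  then show ?thesis by (simp add: cmod_power2)
qed

lemma is_ell2_iff: "is_ell2 f \<longleftrightarrow> f (0, False) = 0 \<and> square_summable f"
proof -
  have "x \<in> arcs \<longleftrightarrow> x \<noteq> (0, False)" for x by (cases x) (auto simp: arcs_def)
  then show ?thesis by (auto simp: is_ell2_def square_summable_def)
qed

lemma l2norm_eq_norm:
  assumes "square_summable f"
  shows "l2norm f = norm (Abs_l2 f)"
  unfolding l2norm_def
  using norm_l2_square[of "Abs_l2 f"] assms by (simp add: Abs_l2_inverse real_sqrt_unique)

lemma arcs_at: "{x \<in> arcs. fst x = i} = (if i = 0 then {(0, True)} else {(i, True), (i, False)})"
  by (auto simp: arcs_def)

locale half_line_walk =
  fixes p q :: "nat \<Rightarrow> real"
  assumes q_nonneg: "\<And>j. q j \<ge> 0" and p_plus_q: "\<And>j. p j + q j = 1" and q_0: "q 0 = 0"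
    and p_pos: "\<And>j. p j > 0" and q_pos: "\<And>j. 1 \<le> j \<Longrightarrow> q j > 0"
    and positive_recurrent: "summable (\<lambda>j. wgt p q (Suc j))"
begin

definition amp :: "arc \<Rightarrow> complex" where
  "amp x = complex_of_real (sqrt (if snd x then p (fst x) else q (fst x)))"

definition a_coeff :: "qstate \<Rightarrow> nat \<Rightarrow> complex" where
  "a_coeff \<phi> k = amp (k, False) * \<phi> (k, False) + amp (k, True) * \<phi> (k, True)"

definition proj_a :: "qstate \<Rightarrow> qstate" where
  "proj_a \<phi> x = a_coeff \<phi> (fst x) * amp x"

definition arc_shift :: "arc \<Rightarrow> arc" where
  "arc_shift x = (if snd x then (Suc (fst x), False)
                  else if 1 \<le> fst x then (fst x - 1, True) else (0, False))"

definition step :: "qstate \<Rightarrow> qstate" where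
  "step \<phi> x = 2 * proj_a \<phi> (arc_shift x) - \<phi> (arc_shift x)"

lemma p_nonneg: "p j \<ge> 0"
  using p_pos[of j] by simp

lemma p_0: "p 0 = 1"
  using p_plus_q[of 0] q_0 by simp

lemma cnj_amp [simp]: "cnj (amp x) = amp x"
  by (simp add: amp_def)

lemma amp_0_False [simp]: "amp (0, False) = 0"
  by (simp add: amp_def q_0)

lemma amp_block: "amp (k, True) * amp (k, True) + amp (k, False) * amp (k, False) = 1"
  using p_plus_q[of k] p_nonneg[of k] q_nonneg[of k]
  by (simp add: amp_def flip: of_real_mult of_real_add)

lemma cmod_amp_block: "(cmod (amp (k, True)))\<^sup>2 + (cmod (amp (k, False)))\<^sup>2 = 1"
  using p_plus_q[of k] p_nonneg[of k] q_nonneg[of k] by (simp add: amp_def)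

lemma avec_eq: "avec p q j x = (if fst x = j then amp x else 0)"
  by (cases x) (auto simp: avec_def arcs_def amp_def q_0 Suc_le_eq)

lemma arc_shift_arc_shift [simp]: "arc_shift (arc_shift x) = x"
  by (cases x) (auto simp: arc_shift_def)

lemma reflection_block:
  "(cmod (2 * proj_a \<phi> (k, True) - \<phi> (k, True)))\<^sup>2 + (cmod (2 * proj_a \<phi> (k, False) - \<phi> (k, False)))\<^sup>2
     = (cmod (\<phi> (k, True)))\<^sup>2 + (cmod (\<phi> (k, False)))\<^sup>2"
proof -
  have "(sqrt (q k))\<^sup>2 + (sqrt (p k))\<^sup>2 = 1"
    using p_plus_q[of k] p_nonneg[of k] q_nonneg[of k] by simp
  from reflection_norm[OF this, of "\<phi> (k, False)" "\<phi> (k, True)"] show ?thesis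
    by (simp add: proj_a_def a_coeff_def amp_def algebra_simps)
qed

sublocale walk: real_l2_isometry step
proof
  fix f g :: qstate and c :: complex
  show "step (\<lambda>x. f x + g x) = (\<lambda>x. step f x + step g x)"
    and "step (\<lambda>x. c * f x) = (\<lambda>x. c * step f x)"
    and "step (\<lambda>x. cnj (f x)) = (\<lambda>x. cnj (step f x))"
    by (simp_all add: fun_eq_iff step_def proj_a_def a_coeff_def algebra_simps)
  have bij: "bij_betw arc_shift UNIV UNIV"
    by (rule bij_betwI[of _ _ _ arc_shift]) auto
  assume "square_summable f"
  then have reflected: "square_summable (\<lambda>x. 2 * proj_a f x - f x)"
    "(\<Sum>\<^sub>\<infinity>x. (cmod (2 * proj_a f x - f x))\<^sup>2) = (\<Sum>\<^sub>\<infinity>x. (cmod (f x))\<^sup>2)"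
    using square_sum_nat_bool_blocks_eq[of f "\<lambda>x. 2 * proj_a f x - f x"] reflection_block by auto
  then show "square_summable (step f)"
    using summable_on_reindex_bij_betw[OF bij, of "\<lambda>x. (cmod (2 * proj_a f x - f x))\<^sup>2"]
    by (simp add: square_summable_def step_def)
  show "(\<Sum>\<^sub>\<infinity>x. (cmod (step f x))\<^sup>2) = (\<Sum>\<^sub>\<infinity>x. (cmod (f x))\<^sup>2)"
    using reflected infsum_reindex_bij_betw[OF bij, of "\<lambda>x. (cmod (2 * proj_a f x - f x))\<^sup>2"]
    by (simp add: step_def)
qed

definition a_parallel :: "qstate \<Rightarrow> bool" where
  "a_parallel \<theta> \<longleftrightarrow> (\<forall>k. amp (k, True) * \<theta> (k, False) = amp (k, False) * \<theta> (k, True))"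

lemma proj_a_a_parallel:
  assumes "a_parallel \<theta>"
  shows "proj_a \<theta> = \<theta>"
proof
  fix x :: arc
  obtain k b where x: "x = (k, b)" by (cases x)
  have h: "amp (k, True) * \<theta> (k, False) = amp (k, False) * \<theta> (k, True)"
    using assms by (simp add: a_parallel_def)
  show "proj_a \<theta> x = \<theta> x"
  proof (cases b)
    case True
    have "a_coeff \<theta> k * amp (k, True)
        = amp (k, False) * (amp (k, True) * \<theta> (k, False)) + amp (k, True) * amp (k, True) * \<theta> (k, True)"
      by (simp add: a_coeff_def algebra_simps)
    also have "\<dots> = (amp (k, True) * amp (k, True) + amp (k, False) * amp (k, False)) * \<theta> (k, True)"
      unfolding h by (simp add: algebra_simps)
    finally show ?thesis using x True amp_block by (simp add: proj_a_def)
  next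
    case False
    have "a_coeff \<theta> k * amp (k, False)
        = amp (k, False) * amp (k, False) * \<theta> (k, False) + amp (k, True) * (amp (k, False) * \<theta> (k, True))"
      by (simp add: a_coeff_def algebra_simps)
    also have "\<dots> = (amp (k, True) * amp (k, True) + amp (k, False) * amp (k, False)) * \<theta> (k, False)"
      unfolding h[symmetric] by (simp add: algebra_simps)
    finally show ?thesis using x False amp_block by (simp add: proj_a_def)
  qed
qed

lemma a_coeff_square_le: "(cmod (a_coeff \<phi> k))\<^sup>2 \<le> (cmod (\<phi> (k, True)))\<^sup>2 + (cmod (\<phi> (k, False)))\<^sup>2"
proof -
  let ?a = "cmod (amp (k, False))" and ?b = "cmod (amp (k, True))"
  let ?u = "cmod (\<phi> (k, False))" and ?v = "cmod (\<phi> (k, True))"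
  have "cmod (a_coeff \<phi> k) \<le> ?a * ?u + ?b * ?v"
    unfolding a_coeff_def
    using norm_triangle_ineq[of "amp (k, False) * \<phi> (k, False)" "amp (k, True) * \<phi> (k, True)"]
    by (simp add: norm_mult)
  then have "(cmod (a_coeff \<phi> k))\<^sup>2 \<le> (?a * ?u + ?b * ?v)\<^sup>2"
    by (simp add: power_mono)
  also have "\<dots> \<le> (?a\<^sup>2 + ?b\<^sup>2) * (?u\<^sup>2 + ?v\<^sup>2)"
    using zero_le_power2[of "?a * ?v - ?b * ?u"] by (simp add: power2_eq_square algebra_simps)
  finally show ?thesis using cmod_amp_block[of k] by (simp add: add.commute)
qed

lemma proj_a_block: "(cmod (proj_a \<phi> (k, True)))\<^sup>2 + (cmod (proj_a \<phi> (k, False)))\<^sup>2 = (cmod (a_coeff \<phi> k))\<^sup>2"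
  using cmod_amp_block[of k]
  by (simp add: proj_a_def norm_mult power_mult_distrib flip: distrib_left)

lemma is_ell2_proj_a:
  assumes "is_ell2 \<phi>"
  shows "is_ell2 (proj_a \<phi>)"
proof -
  have "square_summable \<phi>" using assms by (simp add: is_ell2_iff)
  then have "square_summable (proj_a \<phi>)"
    by (rule square_summable_nat_bool_blocks) (simp add: proj_a_block a_coeff_square_le)
  then show ?thesis by (simp add: is_ell2_iff proj_a_def)
qed

lemma l2inner_avec: "l2inner (avec p q k) f = a_coeff f k"
proof -
  have "((\<lambda>x. cnj (avec p q k x) * f x) has_sum a_coeff f k) UNIV"
    by (rule has_sum_finite_neutralI[of "{(k, True), (k, False)}"])
      (auto simp: avec_eq a_coeff_def add.commute)
  then show ?thesis by (simp add: l2inner_def infsumI)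
qed

lemma span_a_elem:
  assumes "s \<in> span_a p q"
  obtains N c where "\<And>x. s x = (if fst x < N then c (fst x) * amp x else 0)"
proof -
  obtain N c where s: "s = (\<lambda>x. \<Sum>j<N. c j * avec p q j x)"
    using assms by (auto simp: span_a_def)
  show ?thesis
    by (rule that[of N c]) (simp add: s avec_eq if_distrib[of "\<lambda>t. c _ * t"] sum.delta' cong: if_cong)
qed

lemma span_a_a_parallel:
  assumes "s \<in> span_a p q"
  shows "a_parallel s" and "square_summable s"
proof -
  obtain N c where s: "\<And>x. s x = (if fst x < N then c (fst x) * amp x else 0)"
    using span_a_elem[OF assms] by blast
  then show "a_parallel s" by (simp add: a_parallel_def algebra_simps)
  have "((\<lambda>x. (cmod (s x))\<^sup>2) has_sum (\<Sum>x\<in>{..<N} \<times> UNIV. (cmod (s x))\<^sup>2)) UNIV"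
    by (rule has_sum_finite_neutralI) (auto simp: s)
  then show "square_summable s" by (auto simp: square_summable_def summable_on_def)
qed

lemma cspan_a_a_parallel:
  assumes "\<theta> \<in> cspan_a p q"
  shows "a_parallel \<theta>"
proof -
  obtain s where \<theta>: "is_ell2 \<theta>" and s: "\<And>n. s n \<in> span_a p q"
    and lim: "(\<lambda>n. l2norm (\<lambda>x. s n x - \<theta> x)) \<longlonglongrightarrow> 0"
    using assms by (auto simp: cspan_a_def)
  have pointwise: "(\<lambda>n. s n x) \<longlonglongrightarrow> \<theta> x" for x
  proof -
    have "square_summable (\<lambda>x. s n x - \<theta> x)" for n
      using \<theta> span_a_a_parallel(2)[OF s] by (simp add: is_ell2_iff square_summable_diff)
    then have "cmod (s n x - \<theta> x) \<le> l2norm (\<lambda>x. s n x - \<theta> x)" for n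
      using norm_Rep_l2_le[of "Abs_l2 (\<lambda>x. s n x - \<theta> x)" x] by (simp add: l2norm_eq_norm Abs_l2_inverse)
    then have "(\<lambda>n. s n x - \<theta> x) \<longlonglongrightarrow> 0"
      by (intro Lim_null_comparison[OF _ lim]) auto
    then show ?thesis by (simp add: LIM_zero_iff)
  qed
  show ?thesis unfolding a_parallel_def
  proof
    fix k
    have "(\<lambda>n. amp (k, True) * s n (k, False) - amp (k, False) * s n (k, True))
        \<longlonglongrightarrow> amp (k, True) * \<theta> (k, False) - amp (k, False) * \<theta> (k, True)"
      by (intro tendsto_diff tendsto_mult tendsto_const pointwise)
    moreover have "amp (k, True) * s n (k, False) - amp (k, False) * s n (k, True) = 0" for n
      using span_a_a_parallel(1)[OF s[of n]] by (simp add: a_parallel_def)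
    ultimately show "amp (k, True) * \<theta> (k, False) = amp (k, False) * \<theta> (k, True)"
      using LIMSEQ_unique[OF _ tendsto_const] by fastforce
  qed
qed

lemma avec_in_cspan_a: "avec p q k \<in> cspan_a p q"
proof -
  have "avec p q k \<in> span_a p q"
    unfolding span_a_def
    by (intro CollectI exI[of _ "Suc k"] exI[of _ "\<lambda>j. if j = k then 1 else 0"])
      (simp add: if_distrib cong: if_cong)
  moreover have "is_ell2 (avec p q k)"
    using span_a_a_parallel(2)[OF calculation] by (simp add: is_ell2_iff avec_eq)
  ultimately show ?thesis
    unfolding cspan_a_def by (auto intro!: exI[of _ "\<lambda>n. avec p q k"] simp: l2norm_def)
qed

text \<open>The truncations \<open>\<Sum>j<n. a_coeff \<phi> j \<cdot> a\<^sub>j\<close> converge to \<open>proj_a \<phi>\<close>.\<close>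

lemma proj_a_in_cspan_a:
  assumes "is_ell2 \<phi>"
  shows "proj_a \<phi> \<in> cspan_a p q"
proof -
  have P: "square_summable (proj_a \<phi>)" using is_ell2_proj_a[OF assms] by (simp add: is_ell2_iff)
  define s where "s n = (\<lambda>x. \<Sum>j<n. a_coeff \<phi> j * avec p q j x)" for n
  have "s n \<in> span_a p q" for n unfolding s_def span_a_def by blast
  have s_eq: "s n x = (if fst x < n then proj_a \<phi> x else 0)" for n x
    unfolding s_def avec_eq proj_a_def
    by (simp add: if_distrib[of "\<lambda>t. a_coeff \<phi> _ * t"] sum.delta' cong: if_cong)
  define B where "B j = (cmod (proj_a \<phi> (j, True)))\<^sup>2 + (cmod (proj_a \<phi> (j, False)))\<^sup>2" for j
  have "l2norm (\<lambda>x. s n x - proj_a \<phi> x) = sqrt (\<Sum>\<^sub>\<infinity>j. if n \<le> j then B j else 0)" for n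
  proof -
    have "(\<lambda>x. (cmod (s n x - proj_a \<phi> x))\<^sup>2) = (\<lambda>x. if n \<le> fst x then (cmod (proj_a \<phi> x))\<^sup>2 else 0)"
      by (simp add: fun_eq_iff s_eq)
    moreover have "(\<lambda>x. if n \<le> fst x then (cmod (proj_a \<phi> x))\<^sup>2 else 0) summable_on UNIV"
      using P unfolding square_summable_def by (rule summable_on_comparison_test) auto
    ultimately show ?thesis
      unfolding l2norm_def by (simp add: infsum_nat_bool(2) B_def if_distrib cong: if_cong)
  qed
  moreover have "B summable_on UNIV"
    unfolding B_def using infsum_nat_bool(1)[of "\<lambda>x. (cmod (proj_a \<phi> x))\<^sup>2"] P
    by (simp add: square_summable_def)
  then have "(\<lambda>n. sqrt (\<Sum>\<^sub>\<infinity>j. if n \<le> j then B j else 0)) \<longlonglongrightarrow> 0"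
    using tendsto_real_sqrt[OF infsum_tail_tendsto_zero] by simp
  ultimately have "(\<lambda>n. l2norm (\<lambda>x. s n x - proj_a \<phi> x)) \<longlonglongrightarrow> 0" by simp
  then show ?thesis
    unfolding cspan_a_def using is_ell2_proj_a[OF assms] \<open>\<And>n. s n \<in> span_a p q\<close> by blast
qed

lemma proj_a_orthogonal:
  assumes "is_ell2 \<phi>" "\<theta> \<in> cspan_a p q"
  shows "l2inner \<theta> (\<lambda>x. \<phi> x - proj_a \<phi> x) = 0"
proof -
  have "square_summable \<theta>" "square_summable (\<lambda>x. \<phi> x - proj_a \<phi> x)"
    using assms is_ell2_proj_a[OF assms(1)]
    by (auto simp: cspan_a_def is_ell2_iff intro: square_summable_diff)
  then have summable: "(\<lambda>x. cnj (\<theta> x) * (\<phi> x - proj_a \<phi> x)) summable_on UNIV"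
    by (rule abs_summable_summable[OF abs_summable_cnj_mult])
  have "cnj (\<theta> (k, True)) * (\<phi> (k, True) - proj_a \<phi> (k, True))
      + cnj (\<theta> (k, False)) * (\<phi> (k, False) - proj_a \<phi> (k, False)) = 0" for k
  proof -
    define c where "c = a_coeff \<theta> k"
    have "\<theta> x = a_coeff \<theta> (fst x) * amp x" for x
      using fun_cong[OF proj_a_a_parallel[OF cspan_a_a_parallel[OF assms(2)]], of x]
      by (simp add: proj_a_def)
    then have "\<theta> (k, True) = c * amp (k, True)" "\<theta> (k, False) = c * amp (k, False)"
      by (simp_all add: c_def)
    then have "cnj (\<theta> (k, True)) * (\<phi> (k, True) - proj_a \<phi> (k, True))
        + cnj (\<theta> (k, False)) * (\<phi> (k, False) - proj_a \<phi> (k, False))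
        = cnj c * (a_coeff \<phi> k
            - (amp (k, True) * amp (k, True) + amp (k, False) * amp (k, False)) * a_coeff \<phi> k)"
      by (simp add: proj_a_def a_coeff_def[of \<phi>] algebra_simps)
    then show ?thesis by (simp add: amp_block)
  qed
  then show ?thesis
    unfolding l2inner_def infsum_nat_bool(2)[OF summable] by simp
qed

lemma PiA_eq:
  assumes "is_ell2 \<phi>"
  shows "PiA p q \<phi> = proj_a \<phi>"
  unfolding PiA_def
proof (rule the_equality)
  show "proj_a \<phi> \<in> cspan_a p q \<and> (\<forall>\<theta>\<in>cspan_a p q. l2inner \<theta> (\<lambda>x. \<phi> x - proj_a \<phi> x) = 0)"
    using proj_a_in_cspan_a[OF assms] proj_a_orthogonal[OF assms] by blast
next
  fix \<psi> assume \<psi>: "\<psi> \<in> cspan_a p q \<and> (\<forall>\<theta>\<in>cspan_a p q. l2inner \<theta> (\<lambda>x. \<phi> x - \<psi> x) = 0)"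
  have "a_coeff (\<lambda>x. \<phi> x - \<psi> x) k = 0" for k
    using \<psi> avec_in_cspan_a[of k] by (simp flip: l2inner_avec)
  then have "a_coeff \<psi> = a_coeff \<phi>" by (simp add: fun_eq_iff a_coeff_def algebra_simps)
  have "\<psi> = proj_a \<psi>" using proj_a_a_parallel[OF cspan_a_a_parallel] \<psi> by simp
  also have "\<dots> = proj_a \<phi>" using \<open>a_coeff \<psi> = a_coeff \<phi>\<close> by (simp add: proj_a_def[abs_def])
  finally show "\<psi> = proj_a \<phi>" .
qed

lemma evol_eq:
  assumes "is_ell2 \<phi>"
  shows "evol p q \<phi> = step \<phi>"
proof
  fix x :: arc
  have "\<phi> (0, False) = 0" using assms by (simp add: is_ell2_iff)
  then show "evol p q \<phi> x = step \<phi> x"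
    by (cases x) (auto simp: evol_def shift_def coin_def PiA_eq[OF assms] step_def arc_shift_def proj_a_def)
qed

lemma is_ell2_step:
  assumes "is_ell2 \<phi>"
  shows "is_ell2 (step \<phi>)"
  using assms walk.square_summable by (simp add: is_ell2_iff step_def arc_shift_def proj_a_def)

lemma evol_funpow:
  assumes "is_ell2 \<Psi>"
  shows "(evol p q ^^ t) \<Psi> = (step ^^ t) \<Psi>" and "is_ell2 ((step ^^ t) \<Psi>)"
proof -
  show ell2: "is_ell2 ((step ^^ t) \<Psi>)" for t
    using assms by (induction t) (simp_all add: is_ell2_step)
  show "(evol p q ^^ t) \<Psi> = (step ^^ t) \<Psi>"
    by (induction t) (simp_all add: evol_eq ell2)
qed

subsection \<open>Stationary states\<close>

lemma wgt_Suc: "wgt p q (Suc k) * q (Suc k) = wgt p q k * p k"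
  using q_pos[of "Suc k"] by (simp add: wgt_def field_simps)

lemma wgt_pos: "wgt p q k > 0"
  unfolding wgt_def using p_pos q_pos by (auto intro!: divide_pos_pos prod_pos)

lemma pi_stat_eq: "pi_stat p q k = wgt p q k / (1 + CR p q)"
  by (simp add: pi_stat_def wgt_def)

lemma CR_nonneg: "CR p q \<ge> 0"
  unfolding CR_def using positive_recurrent wgt_pos by (intro suminf_nonneg) (auto intro: less_imp_le)

lemma pi_stat_pos: "pi_stat p q k > 0"
  using wgt_pos[of k] CR_nonneg by (simp add: pi_stat_eq)

lemma pi_stat_has_sum: "(pi_stat p q has_sum 1) UNIV"
proof -
  have "(\<lambda>j. wgt p q (Suc j)) sums CR p q"
    using positive_recurrent by (simp add: CR_def summable_sums)
  then have "wgt p q sums (CR p q + wgt p q 0)" by (simp only: sums_Suc_iff)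
  then have "wgt p q sums (CR p q + 1)" by (simp add: wgt_def)
  then have "pi_stat p q sums 1"
    using sums_divide[of "wgt p q" "CR p q + 1" "1 + CR p q"] CR_nonneg
    by (simp add: pi_stat_eq[abs_def] add.commute)
  then show ?thesis by (rule sums_nonneg_imp_has_sum) (simp add: pi_stat_pos less_imp_le)
qed

lemma sqrt_pi_stat_balance:
  "sqrt (pi_stat p q (Suc k)) * sqrt (q (Suc k)) = sqrt (pi_stat p q k) * sqrt (p k)"
  using wgt_Suc[of k] by (simp add: pi_stat_eq field_simps flip: real_sqrt_mult)

text \<open>For \<open>r = \<plusminus>1\<close> this is the eigenvector of \<open>U\<close> for the eigenvalue \<open>r\<close>; it exists because
  \<open>\<pi>\<close> satisfies the detailed balance \<open>\<pi>\<^sub>k p\<^sub>k = \<pi>\<^sub>k\<^sub>+\<^sub>1 q\<^sub>k\<^sub>+\<^sub>1\<close>.\<close>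

definition stationary_state :: "real \<Rightarrow> qstate" where
  "stationary_state r x = complex_of_real (r ^ fst x * sqrt (pi_stat p q (fst x))) * amp x"

lemma stationary_state_block:
  assumes "\<bar>r\<bar> = 1"
  shows "(cmod (stationary_state r (k, True)))\<^sup>2 + (cmod (stationary_state r (k, False)))\<^sup>2 = pi_stat p q k"
  using cmod_amp_block[of k] pi_stat_pos[of k] assms
  by (simp add: stationary_state_def norm_mult norm_power power_mult_distrib less_imp_le
      flip: distrib_left)

lemma stationary_state_square_sum:
  assumes "\<bar>r\<bar> = 1"
  shows "square_summable (stationary_state r)"
    and "(\<Sum>\<^sub>\<infinity>x. (cmod (stationary_state r x))\<^sup>2) = 1"
proof -
  have blocks: "(\<lambda>j. (cmod (stationary_state r (j, True)))\<^sup>2 + (cmod (stationary_state r (j, False)))\<^sup>2)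
      summable_on UNIV"
    using pi_stat_has_sum by (auto simp: stationary_state_block[OF assms] summable_on_def)
  show "square_summable (stationary_state r)"
    unfolding square_summable_def by (rule nonneg_summable_on_nat_bool[OF _ blocks]) simp
  then show "(\<Sum>\<^sub>\<infinity>x. (cmod (stationary_state r x))\<^sup>2) = 1"
    using infsum_nat_bool(2)[of "\<lambda>x. (cmod (stationary_state r x))\<^sup>2"] pi_stat_has_sum
    by (simp add: square_summable_def stationary_state_block[OF assms] infsumI)
qed

lemma a_coeff_stationary_state:
  "a_coeff (stationary_state r) k = complex_of_real (r ^ k * sqrt (pi_stat p q k))"
proof -
  have "a_coeff (stationary_state r) k = complex_of_real (r ^ k * sqrt (pi_stat p q k))
      * (amp (k, True) * amp (k, True) + amp (k, False) * amp (k, False))"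
    by (simp add: a_coeff_def stationary_state_def algebra_simps)
  then show ?thesis by (simp add: amp_block)
qed

lemma stationary_state_Suc_False:
  "stationary_state r (Suc k, False) = complex_of_real r * stationary_state r (k, True)"
proof -
  have "stationary_state r (Suc k, False)
      = complex_of_real (r * (r ^ k * (sqrt (pi_stat p q (Suc k)) * sqrt (q (Suc k)))))"
    by (simp add: stationary_state_def amp_def mult_ac)
  also have "\<dots> = complex_of_real r * stationary_state r (k, True)"
    unfolding sqrt_pi_stat_balance by (simp add: stationary_state_def amp_def mult_ac)
  finally show ?thesis .
qed

lemma step_stationary_state:
  assumes "\<bar>r\<bar> = 1"
  shows "step (stationary_state r) x = complex_of_real r * stationary_state r x"
proof -
  have "r * r = 1" using assms abs_mult_self_eq[of r] by simp
  have "proj_a (stationary_state r) = stationary_state r"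
    by (simp add: fun_eq_iff proj_a_def a_coeff_stationary_state stationary_state_def)
  then have shift: "step (stationary_state r) x = stationary_state r (arc_shift x)"
    by (simp add: step_def)
  obtain k b where x: "x = (k, b)" by (cases x)
  show ?thesis
  proof (cases b)
    case True
    then show ?thesis using shift x by (simp add: arc_shift_def stationary_state_Suc_False)
  next
    case False
    show ?thesis
    proof (cases k)
      case 0
      then show ?thesis using shift x False by (simp add: arc_shift_def stationary_state_def)
    next
      case (Suc j)
      have "complex_of_real r * stationary_state r (Suc j, False)
          = complex_of_real r * complex_of_real r * stationary_state r (j, True)"
        by (simp add: stationary_state_Suc_False mult.assoc)
      also have "complex_of_real r * complex_of_real r = 1"
        using \<open>r * r = 1\<close> by (metis of_real_1 of_real_mult)
      finally show ?thesis using shift x False Suc by (simp add: arc_shift_def)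
    qed
  qed
qed

lemma step_eigenvector_vanishes:
  assumes "\<bar>r\<bar> = 1" and eigen: "\<And>x. step d x = complex_of_real r * d x" and "d (0, True) = 0"
  shows "d (k, True) = 0 \<and> (1 \<le> k \<longrightarrow> d (k, False) = 0)"
proof (induction k)
  case 0
  show ?case using \<open>d (0, True) = 0\<close> by simp
next
  case (Suc k)
  have "r \<noteq> 0" using assms(1) by auto
  have "a_coeff d k = 0"
    using Suc by (cases k) (auto simp: a_coeff_def)
  then have "complex_of_real r * d (Suc k, False) = 0"
    using eigen[of "(Suc k, False)"] Suc by (simp add: step_def arc_shift_def proj_a_def)
  then have False_0: "d (Suc k, False) = 0" using \<open>r \<noteq> 0\<close> by simp
  then have "2 * a_coeff d (Suc k) * amp (Suc k, False) = 0"
    using eigen[of "(k, True)"] Suc by (simp add: step_def arc_shift_def proj_a_def)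
  moreover have "amp (Suc k, False) \<noteq> 0" "amp (Suc k, True) \<noteq> 0"
    using q_pos[of "Suc k"] p_pos[of "Suc k"] by (simp_all add: amp_def)
  ultimately show ?case using False_0 by (simp add: a_coeff_def)
qed

lemma step_eigenvector_unique:
  assumes "\<bar>r\<bar> = 1" and eigen: "\<And>x. step z x = complex_of_real r * z x" and "z (0, False) = 0"
  shows "z x = z (0, True) / complex_of_real (sqrt (pi_stat p q 0)) * stationary_state r x"
proof -
  define c where "c = z (0, True) / complex_of_real (sqrt (pi_stat p q 0))"
  define d where "d x = z x - c * stationary_state r x" for x
  have "d = (\<lambda>x. z x + (- c) * stationary_state r x)" by (simp add: fun_eq_iff d_def)
  then have "step d x = step z x + (- c) * step (stationary_state r) x" for x
    by (simp only: walk.add walk.cmult)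
  then have "step d x = complex_of_real r * d x" for x
    by (simp add: eigen step_stationary_state[OF assms(1)] d_def algebra_simps)
  moreover have "d (0, True) = 0"
    using pi_stat_pos[of 0] by (simp add: d_def c_def stationary_state_def amp_def p_0)
  ultimately have "d (k, True) = 0 \<and> (1 \<le> k \<longrightarrow> d (k, False) = 0)" for k
    using step_eigenvector_vanishes[OF assms(1)] by blast
  then have "d x = 0"
    using \<open>z (0, False) = 0\<close> by (cases x; rename_tac k b; case_tac b; case_tac k)
      (auto simp: d_def stationary_state_def)
  then show ?thesis by (simp add: d_def c_def)
qed

subsection \<open>Cesaro limits and the lower bound\<close>

definition signed_walk :: "real \<Rightarrow> arc l2 \<Rightarrow> arc l2" where
  "signed_walk r v = r *\<^sub>R walk.l2_map v"

lemma orthogonal_transformation_signed_walk: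
  assumes "\<bar>r\<bar> = 1"
  shows "orthogonal_transformation (signed_walk r)"
proof -
  have "r = 1 \<or> r = -1" using assms by auto
  then show ?thesis
    using walk.orthogonal_transformation_l2_map
    by (auto simp: signed_walk_def[abs_def] orthogonal_transformation_neg)
qed

lemma Rep_signed_walk: "Rep_l2 (signed_walk r v) x = complex_of_real r * step (Rep_l2 v) x"
  by (simp add: signed_walk_def scaleR_l2.rep_eq walk.Rep_l2_map)

lemma Rep_signed_walk_funpow:
  "Rep_l2 ((signed_walk r ^^ t) v) x = complex_of_real r ^ t * (step ^^ t) (Rep_l2 v) x"
proof (induction t arbitrary: x)
  case (Suc t)
  then have "Rep_l2 ((signed_walk r ^^ t) v) = (\<lambda>x. complex_of_real r ^ t * (step ^^ t) (Rep_l2 v) x)"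
    by (simp add: fun_eq_iff)
  then show ?case by (simp add: Rep_signed_walk walk.cmult)
qed simp

lemma l2inner_stationary_state_self:
  assumes "\<bar>r\<bar> = 1"
  shows "l2inner (stationary_state r) (\<lambda>x. c * stationary_state r x) = c"
proof -
  have "((\<lambda>x. (cmod (stationary_state r x))\<^sup>2) has_sum 1) UNIV"
    using stationary_state_square_sum[OF assms] has_sum_infsum[of "\<lambda>x. (cmod (stationary_state r x))\<^sup>2" UNIV]
    by (simp add: square_summable_def)
  then have "((\<lambda>x. c * complex_of_real ((cmod (stationary_state r x))\<^sup>2)) has_sum c * 1) UNIV"
    using has_sum_cmult_right[OF has_sum_of_real] by fastforce
  moreover have "c * complex_of_real ((cmod (stationary_state r x))\<^sup>2)
      = cnj (stationary_state r x) * (c * stationary_state r x)" for x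
    by (subst complex_norm_square) (simp add: mult_ac)
  ultimately have "((\<lambda>x. cnj (stationary_state r x) * (c * stationary_state r x)) has_sum c) UNIV"
    by (simp only: mult_1_right)
  then show ?thesis by (simp add: l2inner_def infsumI)
qed

lemma l2inner_stationary_state_localized:
  assumes "\<forall>x. x \<notin> {x \<in> arcs. fst x = j} \<longrightarrow> \<Psi> x = 0"
  shows "l2inner (stationary_state r) \<Psi> = complex_of_real (r ^ j * sqrt (pi_stat p q j)) * a_coeff \<Psi> j"
proof -
  have "((\<lambda>x. cnj (stationary_state r x) * \<Psi> x) has_sum
      (complex_of_real (r ^ j * sqrt (pi_stat p q j)) * a_coeff \<Psi> j)) UNIV"
    by (rule has_sum_finite_neutralI[of "{(j, True), (j, False)}"])
      (use assms in \<open>auto simp: stationary_state_def a_coeff_def algebra_simps\<close>)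
  then show ?thesis by (simp add: l2inner_def infsumI)
qed

lemma Rep_Abs_l2_stationary_state:
  assumes "\<bar>r\<bar> = 1"
  shows "Rep_l2 (Abs_l2 (\<lambda>x. a * stationary_state r x)) = (\<lambda>x. a * stationary_state r x)"
  using stationary_state_square_sum(1)[OF assms]
  by (simp add: Abs_l2_inverse square_summable_cmult)

lemma signed_walk_stationary_state:
  assumes "\<bar>r\<bar> = 1"
  shows "signed_walk r (Abs_l2 (\<lambda>x. a * stationary_state r x)) = Abs_l2 (\<lambda>x. a * stationary_state r x)"
proof (rule l2_eqI)
  fix x
  have "r * r = 1" using assms abs_mult_self_eq[of r] by simp
  have "Rep_l2 (signed_walk r (Abs_l2 (\<lambda>x. a * stationary_state r x))) x
      = complex_of_real r * (a * (complex_of_real r * stationary_state r x))"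
    by (simp add: Rep_signed_walk Rep_Abs_l2_stationary_state[OF assms] walk.cmult
        step_stationary_state[OF assms])
  also have "\<dots> = complex_of_real (r * r) * (a * stationary_state r x)"
    by (simp add: mult_ac)
  finally show "Rep_l2 (signed_walk r (Abs_l2 (\<lambda>x. a * stationary_state r x))) x
      = Rep_l2 (Abs_l2 (\<lambda>x. a * stationary_state r x)) x"
    using \<open>r * r = 1\<close> by (simp add: Rep_Abs_l2_stationary_state[OF assms])
qed

lemma inner_Abs_l2_stationary_state:
  assumes "\<bar>r\<bar> = 1"
  shows "Abs_l2 (\<lambda>x. a * stationary_state r x) \<bullet> v = Re (cnj a * l2inner (stationary_state r) (Rep_l2 v))"
  by (simp add: inner_l2_eq_Re Rep_Abs_l2_stationary_state[OF assms] l2inner_def mult.assoc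
      infsum_cmult_right')

text \<open>The limit is an eigenvector, hence a multiple of the stationary state; its coefficient is
  read off from the conserved inner products with the real and imaginary multiples of the
  stationary state.\<close>

lemma cesaro_signed_walk_limit:
  assumes r: "\<bar>r\<bar> = 1" and "is_ell2 \<Psi>"
    and support: "\<forall>x. x \<notin> {x \<in> arcs. fst x = j} \<longrightarrow> \<Psi> x = 0"
    and lim: "(\<lambda>T. cesaro_mean (signed_walk r) T (Abs_l2 \<Psi>)) \<longlonglongrightarrow> V"
  shows "Rep_l2 V x = complex_of_real (r ^ j * sqrt (pi_stat p q j)) * a_coeff \<Psi> j * stationary_state r x"
proof -
  let ?W = "signed_walk r"
  have W: "orthogonal_transformation ?W" by (rule orthogonal_transformation_signed_walk[OF r])
  have Rep_\<Psi>: "Rep_l2 (Abs_l2 \<Psi>) = \<Psi>"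
    using \<open>is_ell2 \<Psi>\<close> by (simp add: Abs_l2_inverse is_ell2_iff)
  have "r * r = 1" using r abs_mult_self_eq[of r] by simp
  have eigen: "step (Rep_l2 V) x = complex_of_real r * Rep_l2 V x" for x
  proof -
    have "Rep_l2 V x = complex_of_real r * step (Rep_l2 V) x"
      using cesaro_mean_limit_fixed[OF W lim] Rep_signed_walk[of r V x] by simp
    then show ?thesis using \<open>r * r = 1\<close> by (simp flip: of_real_mult mult.assoc)
  qed
  have "(\<lambda>T. Rep_l2 (cesaro_mean ?W T (Abs_l2 \<Psi>)) (0, False)) \<longlonglongrightarrow> Rep_l2 V (0, False)"
    by (rule bounded_linear.tendsto[OF bounded_linear_Rep_l2 lim])
  moreover have "Rep_l2 (cesaro_mean ?W T (Abs_l2 \<Psi>)) (0, False) = 0" for T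
    using evol_funpow(2)[OF \<open>is_ell2 \<Psi>\<close>]
    by (simp add: cesaro_mean_def scaleR_l2.rep_eq Rep_l2_sum Rep_signed_walk_funpow Rep_\<Psi> is_ell2_iff)
  ultimately have "Rep_l2 V (0, False) = 0" by (simp add: LIMSEQ_const_iff)
  define c where "c = Rep_l2 V (0, True) / complex_of_real (sqrt (pi_stat p q 0))"
  have c: "Rep_l2 V = (\<lambda>x. c * stationary_state r x)"
    unfolding c_def by (rule ext, rule step_eigenvector_unique[OF r eigen \<open>Rep_l2 V (0, False) = 0\<close>])
  define \<kappa> where "\<kappa> = complex_of_real (r ^ j * sqrt (pi_stat p q j)) * a_coeff \<Psi> j"
  have "Re (cnj a * c) = Re (cnj a * \<kappa>)" for a
  proof -
    have "Abs_l2 (\<lambda>x. a * stationary_state r x) \<bullet> V = Abs_l2 (\<lambda>x. a * stationary_state r x) \<bullet> Abs_l2 \<Psi>"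
      using inner_cesaro_limit_fixed[OF W signed_walk_stationary_state[OF r] lim] .
    then show ?thesis
      by (simp add: inner_Abs_l2_stationary_state[OF r] c Rep_\<Psi> l2inner_stationary_state_self[OF r]
          l2inner_stationary_state_localized[OF support] \<kappa>_def)
  qed
  from this[of 1] this[of \<i>] have "c = \<kappa>" by (simp add: complex_eq_iff)
  then show ?thesis by (simp add: c \<kappa>_def)
qed

lemma tendsto_cesaro_signed_walk:
  assumes r: "\<bar>r\<bar> = 1" and "is_ell2 \<Psi>"
    and support: "\<forall>x. x \<notin> {x \<in> arcs. fst x = j} \<longrightarrow> \<Psi> x = 0"
  shows "(\<lambda>T. Rep_l2 (cesaro_mean (signed_walk r) T (Abs_l2 \<Psi>)) x)
    \<longlonglongrightarrow> complex_of_real (r ^ j * sqrt (pi_stat p q j)) * a_coeff \<Psi> j * stationary_state r x"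
proof -
  have "convergent (\<lambda>T. cesaro_mean (signed_walk r) T (Abs_l2 \<Psi>))"
    using Cauchy_cesaro_mean[OF orthogonal_transformation_signed_walk[OF r]] by (rule Cauchy_convergent)
  then obtain V where lim: "(\<lambda>T. cesaro_mean (signed_walk r) T (Abs_l2 \<Psi>)) \<longlonglongrightarrow> V"
    by (auto simp: convergent_def)
  show ?thesis
    using bounded_linear.tendsto[OF bounded_linear_Rep_l2 lim, of x]
    by (simp add: cesaro_signed_walk_limit[OF assms lim])
qed

lemma Rep_cesaro_signed_walk:
  assumes "is_ell2 \<Psi>"
  shows "Rep_l2 (cesaro_mean (signed_walk r) T (Abs_l2 \<Psi>)) x
    = (1 / real T) *\<^sub>R (\<Sum>t<T. r ^ t *\<^sub>R (step ^^ t) \<Psi> x)"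
  using assms
  by (simp add: cesaro_mean_def scaleR_l2.rep_eq Rep_l2_sum Rep_signed_walk_funpow Abs_l2_inverse
      is_ell2_iff scaleR_conv_of_real)

lemma cmod_stationary_state:
  assumes "\<bar>r\<bar> = 1"
  shows "cmod (stationary_state r x) = cmod (stationary_state 1 x)"
  using assms by (simp add: stationary_state_def norm_mult norm_power)

lemma norm_Rep_cesaro_signed_walk_le:
  assumes "\<bar>r\<bar> = 1" "is_ell2 \<Psi>" "l2norm \<Psi> = 1"
  shows "cmod (Rep_l2 (cesaro_mean (signed_walk r) T (Abs_l2 \<Psi>)) x) \<le> 1"
proof -
  have "norm (Abs_l2 \<Psi>) = 1"
    using assms(2,3) by (simp add: is_ell2_iff l2norm_eq_norm)
  then show ?thesis
    using norm_Rep_l2_le norm_cesaro_mean_le[OF orthogonal_transformation_signed_walk[OF assms(1)]]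
    by (metis order_trans)
qed

lemma cesaro_signed_walk_square_bound:
  fixes x :: arc
  assumes "is_ell2 \<Psi>" "l2norm \<Psi> = 1" "T \<ge> 1"
  defines "m \<equiv> Rep_l2 (cesaro_mean (signed_walk 1) T (Abs_l2 \<Psi>)) x"
    and "n \<equiv> Rep_l2 (cesaro_mean (signed_walk (-1)) T (Abs_l2 \<Psi>)) x"
  shows "(cmod m)\<^sup>2 + (cmod n)\<^sup>2 \<le> (1 / real T) * (\<Sum>t<T. (cmod ((step ^^ t) \<Psi> x))\<^sup>2) + 2 / real T"
proof -
  have "\<bar>m \<bullet> n\<bar> \<le> 1"
    using Cauchy_Schwarz_ineq2[of m n] mult_mono[of "cmod m" 1 "cmod n" 1]
      norm_Rep_cesaro_signed_walk_le[OF _ assms(1,2), of 1 T x]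
      norm_Rep_cesaro_signed_walk_le[OF _ assms(1,2), of "-1" T x]
    by (simp add: m_def n_def)
  then have "2 * \<bar>m \<bullet> n\<bar> / real T \<le> 2 / real T"
    by (simp add: divide_right_mono)
  moreover have "(cmod m)\<^sup>2 + (cmod n)\<^sup>2
      \<le> (1 / real T) * (\<Sum>t<T. (cmod ((step ^^ t) \<Psi> x))\<^sup>2) + 2 * \<bar>m \<bullet> n\<bar> / real T"
    using cesaro_alternating_norm_bound[of T "\<lambda>t. (step ^^ t) \<Psi> x"] \<open>T \<ge> 1\<close>
    by (simp add: m_def n_def Rep_cesaro_signed_walk[OF assms(1)])
  ultimately show ?thesis by linarith
qed

lemma cesaro_square_lower_bound:
  assumes "is_ell2 \<Psi>" "l2norm \<Psi> = 1"
    and support: "\<forall>x. x \<notin> {x \<in> arcs. fst x = j} \<longrightarrow> \<Psi> x = 0"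
    and lim: "(\<lambda>T. (1 / real T) * (\<Sum>t<T. (cmod ((step ^^ t) \<Psi> x))\<^sup>2)) \<longlonglongrightarrow> L"
  shows "2 * pi_stat p q j * (cmod (a_coeff \<Psi> j))\<^sup>2 * (cmod (stationary_state 1 x))\<^sup>2 \<le> L"
proof -
  define \<kappa> where "\<kappa> r = complex_of_real (r ^ j * sqrt (pi_stat p q j)) * a_coeff \<Psi> j * stationary_state r x"
    for r :: real
  have limit_term: "(cmod (\<kappa> r))\<^sup>2 = pi_stat p q j * (cmod (a_coeff \<Psi> j))\<^sup>2 * (cmod (stationary_state 1 x))\<^sup>2"
    if "\<bar>r\<bar> = 1" for r
    using that pi_stat_pos[of j]
    by (simp add: \<kappa>_def norm_mult norm_power power_mult_distrib cmod_stationary_state[OF that]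
        less_imp_le)
  let ?m = "\<lambda>r T. Rep_l2 (cesaro_mean (signed_walk r) T (Abs_l2 \<Psi>)) x"
  have "(\<lambda>T. (cmod (?m 1 T))\<^sup>2 + (cmod (?m (-1) T))\<^sup>2) \<longlonglongrightarrow> (cmod (\<kappa> 1))\<^sup>2 + (cmod (\<kappa> (-1)))\<^sup>2"
    unfolding \<kappa>_def
    by (intro tendsto_add tendsto_power tendsto_norm tendsto_cesaro_signed_walk[OF _ assms(1) support]) auto
  moreover have "(\<lambda>T. (1 / real T) * (\<Sum>t<T. (cmod ((step ^^ t) \<Psi> x))\<^sup>2) + 2 / real T) \<longlonglongrightarrow> L + 0"
    by (intro tendsto_add lim tendsto_divide_0[OF tendsto_const]
        filterlim_at_top_imp_at_infinity[OF filterlim_real_sequentially])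
  moreover have "\<exists>N. \<forall>T\<ge>N. (cmod (?m 1 T))\<^sup>2 + (cmod (?m (-1) T))\<^sup>2
      \<le> (1 / real T) * (\<Sum>t<T. (cmod ((step ^^ t) \<Psi> x))\<^sup>2) + 2 / real T"
    using cesaro_signed_walk_square_bound[OF assms(1,2)] by blast
  ultimately have "(cmod (\<kappa> 1))\<^sup>2 + (cmod (\<kappa> (-1)))\<^sup>2 \<le> L + 0"
    by (rule LIMSEQ_le)
  then show ?thesis using limit_term[of 1] limit_term[of "-1"] by simp
qed

lemma sum_stationary_state_at:
  "(\<Sum>x\<in>{x \<in> arcs. fst x = i}. (cmod (stationary_state 1 x))\<^sup>2) = pi_stat p q i"
proof (cases "i = 0")
  case True
  then show ?thesis using stationary_state_block[of 1 0] by (simp add: arcs_at stationary_state_def)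
next
  case False
  then show ?thesis using stationary_state_block[of 1 i] by (simp add: arcs_at add.commute)
qed

theorem cesaro_avg_lower_bound:
  assumes "is_ell2 \<Psi>" "l2norm \<Psi> = 1"
    and support: "\<forall>x. x \<notin> {x \<in> arcs. fst x = j} \<longrightarrow> \<Psi> x = 0"
  shows "convergent (cesaro_avg p q \<Psi> i) \<and>
    lim (cesaro_avg p q \<Psi> i) \<ge> 2 * (cmod (l2inner (avec p q j) \<Psi>))\<^sup>2 * pi_stat p q i * pi_stat p q j"
proof -
  define E where "E = {x \<in> arcs. fst x = i}"
  define c where "c x = (\<lambda>T. (1 / real T) * (\<Sum>t<T. (cmod ((step ^^ t) \<Psi> x))\<^sup>2))" for x
  have "prob_at p q \<Psi> t i = (\<Sum>x\<in>E. (cmod ((step ^^ t) \<Psi> x))\<^sup>2)" for t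
    by (simp add: prob_at_def evol_funpow(1)[OF assms(1)] E_def)
  then have "cesaro_avg p q \<Psi> i = (\<lambda>T. \<Sum>x\<in>E. c x T)"
    unfolding cesaro_avg_def c_def by (simp add: sum.swap[of _ E] sum_distrib_left)
  moreover have c_lim: "c x \<longlonglongrightarrow> lim (c x)" for x
    using walk.convergent_cesaro_square[of \<Psi> x] assms(1)
    by (simp add: is_ell2_iff c_def convergent_LIMSEQ_iff)
  ultimately have lim: "cesaro_avg p q \<Psi> i \<longlonglongrightarrow> (\<Sum>x\<in>E. lim (c x))"
    by (simp add: tendsto_sum)
  have "2 * pi_stat p q j * (cmod (a_coeff \<Psi> j))\<^sup>2 * pi_stat p q i
      = (\<Sum>x\<in>E. 2 * pi_stat p q j * (cmod (a_coeff \<Psi> j))\<^sup>2 * (cmod (stationary_state 1 x))\<^sup>2)"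
    by (simp add: E_def sum_stationary_state_at flip: sum_distrib_left)
  also have "\<dots> \<le> (\<Sum>x\<in>E. lim (c x))"
    unfolding c_def by (intro sum_mono cesaro_square_lower_bound[OF assms c_lim[unfolded c_def]])
  finally show ?thesis
    using lim by (auto simp: convergent_def limI l2inner_avec mult_ac)
qed

end

theorem corollary1:
  fixes p q :: "nat \<Rightarrow> real"
  assumes nonneg: "\<And>j. p j \<ge> 0" "\<And>j. q j \<ge> 0"
    and no_loops: "\<And>j. p j + q j = 1"
    and q0: "q 0 = 0"
    and ppos: "\<And>j. p j > 0"
    and qpos: "\<And>j. 1 \<le> j \<Longrightarrow> q j > 0"
    and pos_rec: "summable (\<lambda>j. wgt p q (Suc j))"
  shows "\<forall>j::nat. \<forall>\<Psi>0::qstate. \<forall>i::nat.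
           is_ell2 \<Psi>0 \<and> l2norm \<Psi>0 = 1 \<and>
           (\<forall>x. x \<notin> {x \<in> arcs. fst x = j} \<longrightarrow> \<Psi>0 x = 0)
           \<longrightarrow> convergent (cesaro_avg p q \<Psi>0 i) \<and>
               lim (cesaro_avg p q \<Psi>0 i)
                 \<ge> 2 * (cmod (l2inner (avec p q j) \<Psi>0))\<^sup>2 * pi_stat p q i * pi_stat p q j"
proof -
  interpret half_line_walk p q
    using assms by unfold_locales auto
  show ?thesis using cesaro_avg_lower_bound by blast
qed

end
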